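(* Let $\Omega$ be a topological space, $X$ a locally convex topological vector space over $\mathbb{C}$ with defining family of seminorms $\mathfrak{A}$, $V \subset F(\Omega, \mathbb{R}_+)$, $A \subset C(\Omega, \mathbb{C})$ and $W \subset FV_{b}(\Omega, X)$, with $A$ a multiplier of $W$. Let $p \in \mathfrak{A}$, $v \in V$, $f \in F(\Omega, X)$. Suppose (i) $X$ is Hausdorff; (ii) $\overline{(vf)(\Omega)}$ is compact and $vf$ is continuous on $\mathrm{supp}\, v$; (iii) $A$ $\beta$-separates disjoint Lebesgue sets of $vf$ in $\mathrm{supp}\, v$. Then $d_{v, p, \Omega}(f, W) = 0$ if and only if for each $\varepsilon > 0$ and $y \in X$ there is $g \in W$ such that for all $x\in\Omega$: if $p(v(x)f(x) - y) < \varepsilon$ then $p(v(x)g(x) - y) < 2\varepsilon$.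
   Context: $vf(x)=v(x)f(x)$; $\mathrm{supp}\,v$ is the closure of $\{v\neq0\}$. $FV_b(\Omega,X)=\{f:\sup_x v(x)q(f(x))<\infty\ \forall v\in V, q\in\mathfrak{A}\}$. $d_{v,p,\Omega}(f,W)=\inf_{g\in W}\sup_{x\in\Omega}v(x)p(f(x)-g(x))$. $\varphi\in F(\Omega,\mathbb{C})$ is a multiplier of $W$ if $\varphi f+(1-\varphi)g\in W$ for all $f,g\in W$; $A$ is a multiplier if each element is. $X^*$: continuous linear functionals $X\to\mathbb{C}$. A zero-set is $h^{-1}(0)$ with $h\in C(\Omega,\mathbb{R})$; a $z$-filter is a nonempty family $\mathcal{F}$ of zero-sets with $\emptyset\notin\mathcal{F}$, closed under finite intersections and under passing to larger zero-sets. $\mathcal{F}$ is $(A,v)$-antisymmetric if every $F\in\mathcal{F}$ meets $\mathrm{supp}\,v$ and, for each $\phi\in A$ with $\bigcap_{F\in\mathcal{F}}\overline{\phi(F\cap\mathrm{supp}\,v)}\subset[0,1]$ (closures in $\mathbb{C}\cup\{\infty\}$), this intersection is a single point. For $h\in F(\Omega,X)$, "$A$ $\beta$-separates disjoint Lebesgue sets of $h$ in $\mathrm{supp}\,v$" means: for any $(A,v)$-antisymmetric $z$-filter $\mathcal{F}$, any $e^*\in X^*$ and reals $a<b$, there is $F\in\mathcal{F}$ with $F\cap L_a=\emptyset$ or $F\cap L^b=\emptyset$, where $L_a=\{x\in\mathrm{supp}\,v:\Re e^*(h(x))\le a\}$, $L^b=\{x\in\mathrm{supp}\,v:\Re e^*(h(x))\ge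 b\}$. *)

theory Defs
  imports "HOL-Analysis.Analysis"
begin

definition complex_vs :: "(complex \<Rightarrow> 'x::ab_group_add \<Rightarrow> 'x) \<Rightarrow> bool" where
  "complex_vs sc \<longleftrightarrow>
     (\<forall>a x y. sc a (x + y) = sc a x + sc a y) \<and>
     (\<forall>a b x. sc (a + b) x = sc a x + sc b x) \<and>
     (\<forall>a b x. sc a (sc b x) = sc (a * b) x) \<and>
     (\<forall>x. sc 1 x = x)"

definition seminorm_on :: "(complex \<Rightarrow> 'x::ab_group_add \<Rightarrow> 'x) \<Rightarrow> ('x \<Rightarrow> real) \<Rightarrow> bool" where
  "seminorm_on sc q \<longleftrightarrow>
     (\<forall>x y. q (x + y) \<le> q x + q y) \<and> (\<forall>c x. q (sc c x) = cmod c * q x)"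

definition lc_topology :: "('x::ab_group_add \<Rightarrow> real) set \<Rightarrow> 'x topology" where
  "lc_topology P = topology (\<lambda>U. \<forall>x\<in>U. \<exists>F e. finite F \<and> F \<subseteq> P \<and> e > 0 \<and>
        {y. \<forall>q\<in>F. q (y - x) < e} \<subseteq> U)"

definition dual_space :: "(complex \<Rightarrow> 'x::ab_group_add \<Rightarrow> 'x) \<Rightarrow> ('x \<Rightarrow> real) set \<Rightarrow> ('x \<Rightarrow> complex) set" where
  "dual_space sc P = {e. (\<forall>x y. e (x + y) = e x + e y) \<and> (\<forall>c x. e (sc c x) = c * e x) \<and>
                        continuous_map (lc_topology P) euclidean e}"

definition supp :: "('a::topological_space \<Rightarrow> real) \<Rightarrow> 'a set" where
  "supp v = closure {x. v x \<noteq> 0}"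

definition FVb :: "(complex \<Rightarrow> 'x::ab_group_add \<Rightarrow> 'x) \<Rightarrow> ('x \<Rightarrow> real) set \<Rightarrow> ('a \<Rightarrow> real) set \<Rightarrow> ('a \<Rightarrow> 'x) set" where
  "FVb sc P V = {f. \<forall>v\<in>V. \<forall>q\<in>P. bdd_above (range (\<lambda>x. v x * q (f x)))}"

definition dist_vp :: "(complex \<Rightarrow> 'x::ab_group_add \<Rightarrow> 'x) \<Rightarrow> ('a \<Rightarrow> real) \<Rightarrow> ('x \<Rightarrow> real) \<Rightarrow> ('a \<Rightarrow> 'x) \<Rightarrow> ('a \<Rightarrow> 'x) set \<Rightarrow> ereal" where
  "dist_vp sc v p f W = (INF g\<in>W. SUP x. ereal (v x * p (f x - g x)))"

definition is_multiplier :: "(complex \<Rightarrow> 'x::ab_group_add \<Rightarrow> 'x) \<Rightarrow> ('a \<Rightarrow> complex) \<Rightarrow> ('a \<Rightarrow> 'x) set \<Rightarrow> bool" where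
  "is_multiplier sc \<phi> W \<longleftrightarrow> (\<forall>f\<in>W. \<forall>g\<in>W. (\<lambda>x. sc (\<phi> x) (f x) + sc (1 - \<phi> x) (g x)) \<in> W)"

definition zero_set :: "'a::topological_space set \<Rightarrow> bool" where
  "zero_set Z \<longleftrightarrow> (\<exists>h::'a \<Rightarrow> real. continuous_on UNIV h \<and> Z = h -` {0})"

definition z_filter :: "'a::topological_space set set \<Rightarrow> bool" where
  "z_filter \<F> \<longleftrightarrow> \<F> \<noteq> {} \<and> (\<forall>F\<in>\<F>. zero_set F) \<and> {} \<notin> \<F> \<and>
     (\<forall>F\<in>\<F>. \<forall>G\<in>\<F>. F \<inter> G \<in> \<F>) \<and>
     (\<forall>F\<in>\<F>. \<forall>Z. zero_set Z \<and> F \<subseteq> Z \<longrightarrow> Z \<in> \<F>)"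

text \<open>Closure in the one-point compactification C \<union> {\<infinity>} of a set of complex numbers,
  with C \<union> {\<infinity>} represented as complex option (None = \<infinity>).\<close>
definition ext_closure :: "complex set \<Rightarrow> complex option set" where
  "ext_closure S = Some ` closure S \<union> (if bounded S then {} else {None})"

definition antisymmetric_zf :: "('a::topological_space \<Rightarrow> complex) set \<Rightarrow> ('a \<Rightarrow> real) \<Rightarrow> 'a set set \<Rightarrow> bool" where
  "antisymmetric_zf A v \<F> \<longleftrightarrow> z_filter \<F> \<and> (\<forall>F\<in>\<F>. F \<inter> supp v \<noteq> {}) \<and>
     (\<forall>\<phi>\<in>A. (\<Inter>F\<in>\<F>. ext_closure (\<phi> ` (F \<inter> supp v))) \<subseteq> Some ` {z. Im z = 0 \<and> 0 \<le> Re z \<and> Re z \<le> 1}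
        \<longrightarrow> (\<exists>w. (\<Inter>F\<in>\<F>. ext_closure (\<phi> ` (F \<inter> supp v))) = {w}))"

definition beta_separates :: "(complex \<Rightarrow> 'x::ab_group_add \<Rightarrow> 'x) \<Rightarrow> ('x \<Rightarrow> real) set \<Rightarrow>
    ('a::topological_space \<Rightarrow> complex) set \<Rightarrow> ('a \<Rightarrow> real) \<Rightarrow> ('a \<Rightarrow> 'x) \<Rightarrow> bool" where
  "beta_separates sc P A v h \<longleftrightarrow>
     (\<forall>\<F> e a b. antisymmetric_zf A v \<F> \<and> e \<in> dual_space sc P \<and> a < b \<longrightarrow>
        (\<exists>F\<in>\<F>. F \<inter> {x\<in>supp v. Re (e (h x)) \<le> a} = {} \<or> F \<inter> {x\<in>supp v. Re (e (h x)) \<ge> b} = {}))"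

end

theory Submission
  imports Defs
begin

text \<open>The forward implication is the triangle inequality. For the converse suppose that
  d = d_{v,p,\<Omega>}(f, W) > 0. By Zorn's lemma there is a maximal z-filter M all of whose members F
  still satisfy d_{v,p,F}(f, W) \<ge> d. Maximality makes M antisymmetric: if some \<phi> \<in> A had two
  cluster values s < t in [0, 1] along M, then for s < c1 < c2 < t the zero sets {Re \<phi> \<le> c2}
  and {Re \<phi> \<ge> c1} would lie outside M, so each of them meets some member of M in a set on
  which an element of W approximates f better than d; gluing these two elements with the
  multiplier (1 - \<phi>^n)^m, which is close to 1 where Re \<phi> < c1 and close to 0 where Re \<phi> > c2,
  beats d on a whole member of M. Since A \<beta>-separates the Lebesgue sets of vf and continuous
  functionals separate points (Hahn--Banach), compactness of the closure of vf(\<Omega>) yields a point k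
  and a member F of M on whose intersection with supp v the function vf stays within d/4 of k.
  The local hypothesis at (d/4, k) then gives g \<in> W with error at most 3d/4 on F, a contradiction.\<close>

locale complex_vector_structure =
  fixes sc :: "complex \<Rightarrow> 'x::ab_group_add \<Rightarrow> 'x"
  assumes complex_vs: "complex_vs sc"
begin

lemma sc_add_right: "sc a (x + y) = sc a x + sc a y"
  using complex_vs unfolding complex_vs_def by blast

lemma sc_add_left: "sc (a + b) x = sc a x + sc b x"
  using complex_vs unfolding complex_vs_def by blast

lemma sc_sc [simp]: "sc a (sc b x) = sc (a * b) x"
  using complex_vs unfolding complex_vs_def by blast

lemma sc_one [simp]: "sc 1 x = x"
  using complex_vs unfolding complex_vs_def by blast

lemma sc_zero_left [simp]: "sc 0 x = 0"
  using sc_add_left[of 0 0 x] by simp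

lemma sc_zero_right [simp]: "sc a 0 = 0"
  using sc_add_right[of a 0 0] by simp

lemma sc_minus_left: "sc (- a) x = - sc a x"
  using sc_add_left[of a "- a" x] by (simp add: eq_neg_iff_add_eq_0 add.commute)

lemma sc_minus_right: "sc a (- x) = - sc a x"
  using sc_add_right[of a x "- x"] by (simp add: eq_neg_iff_add_eq_0 add.commute)

lemma sc_diff_right: "sc a (x - y) = sc a x - sc a y"
  using sc_add_right[of a x "- y"] by (simp add: sc_minus_right)

lemma sc_diff_left: "sc (a - b) x = sc a x - sc b x"
  using sc_add_left[of a "- b" x] by (simp add: sc_minus_left)

end

locale seminormed = complex_vector_structure +
  fixes q :: "'x::ab_group_add \<Rightarrow> real"
  assumes seminorm: "seminorm_on sc q"
begin

lemma seminorm_add: "q (x + y) \<le> q x + q y"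
  using seminorm unfolding seminorm_on_def by blast

lemma seminorm_sc [simp]: "q (sc c x) = cmod c * q x"
  using seminorm unfolding seminorm_on_def by blast

lemma seminorm_zero [simp]: "q 0 = 0"
  using seminorm_sc[of 0 0] by simp

lemma seminorm_minus [simp]: "q (- x) = q x"
  using seminorm_sc[of "- 1" x] by (simp add: sc_minus_left)

lemma seminorm_nonneg: "0 \<le> q x"
  using seminorm_add[of x "- x"] by simp

lemma seminorm_diff_commute: "q (x - y) = q (y - x)"
  using seminorm_minus[of "x - y"] by simp

lemma seminorm_diff_triangle: "q (x - z) \<le> q (x - y) + q (y - z)"
  using seminorm_add[of "x - y" "y - z"] by simp

lemma seminorm_abs_diff_le: "\<bar>q x - q y\<bar> \<le> q (x - y)"
  using seminorm_add[of "x - y" y] seminorm_add[of "y - x" x] seminorm_diff_commute[of x y] by simp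

end

lemma istopology_lc:
  fixes P :: "('x::ab_group_add \<Rightarrow> real) set"
  shows "istopology (\<lambda>U. \<forall>x\<in>U. \<exists>F e. finite F \<and> F \<subseteq> P \<and> e > 0 \<and> {y. \<forall>q\<in>F. q (y - x) < e} \<subseteq> U)"
  unfolding istopology_def
proof (intro conjI allI impI)
  fix S T :: "'x set"
  assume S: "\<forall>x\<in>S. \<exists>F e. finite F \<and> F \<subseteq> P \<and> e > 0 \<and> {y. \<forall>q\<in>F. q (y - x) < e} \<subseteq> S"
    and T: "\<forall>x\<in>T. \<exists>F e. finite F \<and> F \<subseteq> P \<and> e > 0 \<and> {y. \<forall>q\<in>F. q (y - x) < e} \<subseteq> T"
  show "\<forall>x\<in>S \<inter> T. \<exists>F e. finite F \<and> F \<subseteq> P \<and> e > 0 \<and> {y. \<forall>q\<in>F. q (y - x) < e} \<subseteq> S \<inter> T"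
  proof
    fix x assume x: "x \<in> S \<inter> T"
    obtain F1 e1 where 1: "finite F1" "F1 \<subseteq> P" "e1 > 0" "{y. \<forall>q\<in>F1. q (y - x) < e1} \<subseteq> S"
      using S x by (meson IntD1)
    obtain F2 e2 where 2: "finite F2" "F2 \<subseteq> P" "e2 > 0" "{y. \<forall>q\<in>F2. q (y - x) < e2} \<subseteq> T"
      using T x by (meson IntD2)
    have "{y. \<forall>q\<in>F1 \<union> F2. q (y - x) < min e1 e2} \<subseteq> S \<inter> T"
    proof
      fix y assume y: "y \<in> {y. \<forall>q\<in>F1 \<union> F2. q (y - x) < min e1 e2}"
      then have "\<forall>q\<in>F1. q (y - x) < e1" and "\<forall>q\<in>F2. q (y - x) < e2"
        by auto
      then show "y \<in> S \<inter> T"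
        using 1(4) 2(4) by blast
    qed
    then show "\<exists>F e. finite F \<and> F \<subseteq> P \<and> e > 0 \<and> {y. \<forall>q\<in>F. q (y - x) < e} \<subseteq> S \<inter> T"
      using 1 2 by (intro exI[of _ "F1 \<union> F2"] exI[of _ "min e1 e2"]) simp
  qed
next
  fix K :: "'x set set"
  assume K: "\<forall>U\<in>K. \<forall>x\<in>U. \<exists>F e. finite F \<and> F \<subseteq> P \<and> e > 0 \<and> {y. \<forall>q\<in>F. q (y - x) < e} \<subseteq> U"
  show "\<forall>x\<in>\<Union>K. \<exists>F e. finite F \<and> F \<subseteq> P \<and> e > 0 \<and> {y. \<forall>q\<in>F. q (y - x) < e} \<subseteq> \<Union>K"
  proof
    fix x assume "x \<in> \<Union>K"
    then obtain U where U: "U \<in> K" "x \<in> U" by blast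
    then obtain F e where "finite F" "F \<subseteq> P" "e > 0" "{y. \<forall>q\<in>F. q (y - x) < e} \<subseteq> U"
      using K by meson
    with U(1) show "\<exists>F e. finite F \<and> F \<subseteq> P \<and> e > 0 \<and> {y. \<forall>q\<in>F. q (y - x) < e} \<subseteq> \<Union>K"
      by blast
  qed
qed

lemma openin_lc_topology:
  "openin (lc_topology P) U \<longleftrightarrow>
     (\<forall>x\<in>U. \<exists>F e. finite F \<and> F \<subseteq> P \<and> e > 0 \<and> {y. \<forall>q\<in>F. q (y - x) < e} \<subseteq> U)"
  unfolding lc_topology_def using istopology_lc[of P] by simp

lemma topspace_lc_topology [simp]: "topspace (lc_topology P) = UNIV"
proof -
  have "\<exists>F e. finite F \<and> F \<subseteq> P \<and> e > 0 \<and> {y. \<forall>q\<in>F. q (y - x) < e} \<subseteq> UNIV" for x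
    by (intro exI[of _ "{}"] exI[of _ 1]) simp
  then have "openin (lc_topology P) UNIV"
    unfolding openin_lc_topology by blast
  then show ?thesis
    using openin_subset by blast
qed

lemma continuous_map_lc_topologyI:
  fixes g :: "'x::ab_group_add \<Rightarrow> 'b::metric_space"
  assumes "q \<in> P" and "C > 0" and Lipschitz: "\<And>x y. dist (g y) (g x) \<le> C * q (y - x)"
  shows "continuous_map (lc_topology P) euclidean g"
  unfolding continuous_map_def
proof (intro conjI allI impI)
  fix U :: "'b set" assume "openin euclidean U"
  then have "open U" by simp
  show "openin (lc_topology P) {x \<in> topspace (lc_topology P). g x \<in> U}"
    unfolding openin_lc_topology
  proof
    fix x assume "x \<in> {x \<in> topspace (lc_topology P). g x \<in> U}"
    then obtain r where r: "r > 0" "ball (g x) r \<subseteq> U"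
      using \<open>open U\<close> open_contains_ball by force
    have "{y. \<forall>q'\<in>{q}. q' (y - x) < r / C} \<subseteq> {x \<in> topspace (lc_topology P). g x \<in> U}"
    proof
      fix y assume "y \<in> {y. \<forall>q'\<in>{q}. q' (y - x) < r / C}"
      then have "C * q (y - x) < r"
        using \<open>C > 0\<close> by (simp add: field_simps)
      moreover have "dist (g y) (g x) \<le> C * q (y - x)"
        by (rule Lipschitz)
      ultimately have "g y \<in> ball (g x) r"
        by (simp add: dist_commute)
      then show "y \<in> {x \<in> topspace (lc_topology P). g x \<in> U}"
        using r by auto
    qed
    moreover have "finite {q}" "{q} \<subseteq> P" "r / C > 0"
      using \<open>q \<in> P\<close> r \<open>C > 0\<close> by auto
    ultimately show "\<exists>F e. finite F \<and> F \<subseteq> P \<and> e > 0 \<and>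
        {y. \<forall>q\<in>F. q (y - x) < e} \<subseteq> {x \<in> topspace (lc_topology P). g x \<in> U}"
      by meson
  qed
qed auto

lemma (in seminormed) continuous_map_seminorm:
  assumes "q \<in> P"
  shows "continuous_map (lc_topology P) euclidean (\<lambda>w. q (w - k))"
proof (rule continuous_map_lc_topologyI[OF assms zero_less_one])
  fix x y
  show "dist (q (y - k)) (q (x - k)) \<le> 1 * q (y - x)"
    using seminorm_abs_diff_le[of "y - k" "x - k"] by (simp add: dist_real_def)
qed

lemma Hausdorff_lc_topology_seminorm_nonzero:
  assumes "Hausdorff_space (lc_topology P)" and "z \<noteq> k"
  shows "\<exists>q\<in>P. q (k - z) \<noteq> 0"
proof (rule ccontr)
  assume zero: "\<not> (\<exists>q\<in>P. q (k - z) \<noteq> 0)"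
  obtain U V where UV: "openin (lc_topology P) U" "openin (lc_topology P) V" "z \<in> U" "k \<in> V" "disjnt U V"
    using assms unfolding Hausdorff_space_def topspace_lc_topology by blast
  then have "\<exists>F e. finite F \<and> F \<subseteq> P \<and> e > 0 \<and> {y. \<forall>q\<in>F. q (y - z) < e} \<subseteq> U"
    unfolding openin_lc_topology by blast
  then obtain F e where F: "F \<subseteq> P" "e > 0" and ball: "{y. \<forall>q\<in>F. q (y - z) < e} \<subseteq> U"
    by blast
  have "k \<in> {y. \<forall>q\<in>F. q (y - z) < e}"
    using zero F by fastforce
  with ball UV show False by (auto simp: disjnt_def)
qed

section \<open>Hahn--Banach and the dual space\<close>

context seminormed
begin

text \<open>Partial functionals for the Zorn argument, encoded by their graphs; the pair (x0, q x0)
  fixes the normalisation l x0 = q x0 of the extension.\<close>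

definition dominated_graph :: "'x \<Rightarrow> ('x \<times> real) set \<Rightarrow> bool" where
  "dominated_graph x0 G \<longleftrightarrow>
     (\<forall>x a b. (x, a) \<in> G \<longrightarrow> (x, b) \<in> G \<longrightarrow> a = b) \<and> (x0, q x0) \<in> G \<and>
     (\<forall>x a y b. (x, a) \<in> G \<longrightarrow> (y, b) \<in> G \<longrightarrow> (x + y, a + b) \<in> G) \<and>
     (\<forall>x a c. (x, a) \<in> G \<longrightarrow> (sc (of_real c) x, c * a) \<in> G) \<and>
     (\<forall>x a. (x, a) \<in> G \<longrightarrow> a \<le> q x)"

lemma dominated_graph_line: "dominated_graph x0 {(sc (of_real c) x0, c * q x0) | c. True}"
  unfolding dominated_graph_def
proof (intro conjI allI impI)
  fix x a b
  assume "(x, a) \<in> {(sc (of_real c) x0, c * q x0) | c. True}"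
    and "(x, b) \<in> {(sc (of_real c) x0, c * q x0) | c. True}"
  then obtain c c' where "x = sc (of_real c) x0" "a = c * q x0" "x = sc (of_real c') x0" "b = c' * q x0"
    by blast
  moreover from this have "\<bar>c - c'\<bar> * q x0 = 0"
    using seminorm_sc[of "of_real (c - c')" x0] by (simp add: sc_diff_left)
  ultimately show "a = b"
    by auto
next
  show "(x0, q x0) \<in> {(sc (of_real c) x0, c * q x0) | c. True}"
    by (intro CollectI exI[of _ 1]) simp
next
  fix x a y b
  assume "(x, a) \<in> {(sc (of_real c) x0, c * q x0) | c. True}"
    and "(y, b) \<in> {(sc (of_real c) x0, c * q x0) | c. True}"
  then obtain c c' where "x = sc (of_real c) x0" "a = c * q x0" "y = sc (of_real c') x0" "b = c' * q x0"
    by blast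
  then have "x + y = sc (of_real (c + c')) x0" "a + b = (c + c') * q x0"
    by (simp_all add: sc_add_left algebra_simps)
  then show "(x + y, a + b) \<in> {(sc (of_real c) x0, c * q x0) | c. True}"
    by blast
next
  fix x a d
  assume "(x, a) \<in> {(sc (of_real c) x0, c * q x0) | c. True}"
  then obtain c where "x = sc (of_real c) x0" "a = c * q x0"
    by blast
  then have "sc (of_real d) x = sc (of_real (d * c)) x0" "d * a = (d * c) * q x0"
    by simp_all
  then show "(sc (of_real d) x, d * a) \<in> {(sc (of_real c) x0, c * q x0) | c. True}"
    by blast
next
  fix x a
  assume "(x, a) \<in> {(sc (of_real c) x0, c * q x0) | c. True}"
  then obtain c where "x = sc (of_real c) x0" "a = c * q x0"
    by blast
  moreover have "c * q x0 \<le> \<bar>c\<bar> * q x0"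
    using seminorm_nonneg[of x0] by (simp add: mult_right_mono)
  ultimately show "a \<le> q x"
    by simp
qed

lemma dominated_graph_Union_chain:
  assumes "C \<noteq> {}" and "subset.chain {G. dominated_graph x0 G} C"
  shows "dominated_graph x0 (\<Union>C)"
proof -
  have good: "\<And>G. G \<in> C \<Longrightarrow> dominated_graph x0 G"
    and chain: "\<And>G H. G \<in> C \<Longrightarrow> H \<in> C \<Longrightarrow> G \<subseteq> H \<or> H \<subseteq> G"
    using assms(2) unfolding subset_chain_def by blast+
  have common: "\<exists>G\<in>C. u \<in> G \<and> w \<in> G" if uw: "u \<in> \<Union>C" "w \<in> \<Union>C" for u w
  proof -
    obtain G H where "G \<in> C" "H \<in> C" "u \<in> G" "w \<in> H"
      using uw by blast
    then show ?thesis
      using chain[of G H] by blast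
  qed
  obtain G0 where "G0 \<in> C"
    using assms(1) by blast
  show ?thesis
    unfolding dominated_graph_def
  proof (intro conjI allI impI)
    fix x a b assume "(x, a) \<in> \<Union>C" "(x, b) \<in> \<Union>C"
    then obtain G where "G \<in> C" "(x, a) \<in> G" "(x, b) \<in> G"
      using common by blast
    then show "a = b"
      using good unfolding dominated_graph_def by blast
  next
    show "(x0, q x0) \<in> \<Union>C"
      using \<open>G0 \<in> C\<close> good[OF \<open>G0 \<in> C\<close>] unfolding dominated_graph_def by blast
  next
    fix x a y b assume "(x, a) \<in> \<Union>C" "(y, b) \<in> \<Union>C"
    then obtain G where "G \<in> C" "(x, a) \<in> G" "(y, b) \<in> G"
      using common by blast
    then have "(x + y, a + b) \<in> G"
      using good unfolding dominated_graph_def by blast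
    with \<open>G \<in> C\<close> show "(x + y, a + b) \<in> \<Union>C"
      by blast
  next
    fix x a c assume "(x, a) \<in> \<Union>C"
    then obtain G where "G \<in> C" "(x, a) \<in> G"
      by blast
    then have "(sc (of_real c) x, c * a) \<in> G"
      using good unfolding dominated_graph_def by blast
    with \<open>G \<in> C\<close> show "(sc (of_real c) x, c * a) \<in> \<Union>C"
      by blast
  next
    fix x a assume "(x, a) \<in> \<Union>C"
    then obtain G where "G \<in> C" "(x, a) \<in> G"
      by blast
    then show "a \<le> q x"
      using good unfolding dominated_graph_def by blast
  qed
qed

lemma dominated_graph_extension_value:
  assumes "dominated_graph x0 G"
  obtains \<alpha> where "\<And>y a. (y, a) \<in> G \<Longrightarrow> a - q (y - x1) \<le> \<alpha>"
    and "\<And>y b. (y, b) \<in> G \<Longrightarrow> \<alpha> \<le> q (y + x1) - b"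
proof -
  have add: "\<And>x a y b. (x, a) \<in> G \<Longrightarrow> (y, b) \<in> G \<Longrightarrow> (x + y, a + b) \<in> G"
    and le: "\<And>x a. (x, a) \<in> G \<Longrightarrow> a \<le> q x" and "(x0, q x0) \<in> G"
    using assms unfolding dominated_graph_def by blast+
  have key: "a - q (y - x1) \<le> q (y' + x1) - b" if "(y, a) \<in> G" "(y', b) \<in> G" for y a y' b
  proof -
    have "a + b \<le> q ((y - x1) + (y' + x1))"
      using le[OF add[OF that]] by (simp add: algebra_simps)
    also have "\<dots> \<le> q (y - x1) + q (y' + x1)"
      by (rule seminorm_add)
    finally show ?thesis by simp
  qed
  define S where "S = {a - q (y - x1) | y a. (y, a) \<in> G}"
  have "S \<noteq> {}" "bdd_above S"
    using \<open>(x0, q x0) \<in> G\<close> key unfolding S_def bdd_above_def by blast+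
  show ?thesis
  proof
    show "a - q (y - x1) \<le> Sup S" if "(y, a) \<in> G" for y a
      using that \<open>bdd_above S\<close> by (intro cSup_upper) (auto simp: S_def)
    show "Sup S \<le> q (y + x1) - b" if "(y, b) \<in> G" for y b
      using \<open>S \<noteq> {}\<close> key[OF _ that] by (intro cSup_least) (auto simp: S_def)
  qed
qed

lemma dominated_graph_extension_le:
  assumes "dominated_graph x0 G" and "(y, a) \<in> G"
    and up: "\<And>y a. (y, a) \<in> G \<Longrightarrow> a - q (y - x1) \<le> \<alpha>"
    and lo: "\<And>y b. (y, b) \<in> G \<Longrightarrow> \<alpha> \<le> q (y + x1) - b"
  shows "a + c * \<alpha> \<le> q (y + sc (of_real c) x1)"
proof -
  have scale: "(sc (of_real t) y, t * a) \<in> G" for t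
    using assms(1,2) unfolding dominated_graph_def by blast
  consider "c = 0" | "c > 0" | "c < 0"
    by linarith
  then show ?thesis
  proof cases
    case 1
    then show ?thesis
      using assms(1,2) unfolding dominated_graph_def by simp
  next
    case 2
    define z where "z = sc (of_real (1 / c)) y + x1"
    have "c * \<alpha> \<le> c * (q z - (1 / c) * a)"
      unfolding z_def by (rule mult_left_mono[OF lo[OF scale]]) (use 2 in simp)
    also have "\<dots> = q (sc (of_real c) z) - a"
      using 2 by (simp add: right_diff_distrib)
    also have "sc (of_real c) z = y + sc (of_real c) x1"
      using 2 by (simp add: z_def sc_add_right flip: of_real_mult)
    finally show ?thesis
      by simp
  next
    case 3
    define z where "z = sc (of_real (1 / - c)) y - x1"
    have bound: "- c * ((1 / - c) * a - q z) \<le> - c * \<alpha>"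
      unfolding z_def by (rule mult_left_mono[OF up[OF scale]]) (use 3 in simp)
    have shift: "sc (of_real (- c)) z = y + sc (of_real c) x1"
      using 3 by (simp add: z_def sc_diff_right sc_minus_left sc_minus_right flip: of_real_mult)
    have "q (y + sc (of_real c) x1) = - c * q z"
      unfolding shift[symmetric] using 3 by simp
    with bound 3 show ?thesis
      by (simp add: algebra_simps)
  qed
qed

lemma dominated_graph_extension_coeff_eq:
  assumes G: "dominated_graph x0 G" and x1: "\<forall>a. (x1, a) \<notin> G"
    and "(y1, a1) \<in> G" and "(y2, a2) \<in> G" and eq: "y1 + sc (of_real c1) x1 = y2 + sc (of_real c2) x1"
  shows "c1 = c2"
proof (rule ccontr)
  assume "c1 \<noteq> c2"
  have add: "\<And>x a y b. (x, a) \<in> G \<Longrightarrow> (y, b) \<in> G \<Longrightarrow> (x + y, a + b) \<in> G"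
    and scale: "\<And>x a c. (x, a) \<in> G \<Longrightarrow> (sc (of_real c) x, c * a) \<in> G"
    using G unfolding dominated_graph_def by blast+
  have diff: "sc (of_real (c1 - c2)) x1 = y2 - y1"
    using eq by (simp add: sc_diff_left algebra_simps)
  have "(y2 - y1, a2 - a1) \<in> G"
    using add[OF \<open>(y2, a2) \<in> G\<close> scale[OF \<open>(y1, a1) \<in> G\<close>, of "- 1"]] by (simp add: sc_minus_left)
  from scale[OF this, of "1 / (c1 - c2)"] \<open>c1 \<noteq> c2\<close>
  have "(x1, (a2 - a1) / (c1 - c2)) \<in> G"
    by (simp flip: diff of_real_mult)
  with x1 show False
    by blast
qed

lemma dominated_graph_extend:
  assumes G: "dominated_graph x0 G" and x1: "\<forall>a. (x1, a) \<notin> G"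
  shows "\<exists>G'. dominated_graph x0 G' \<and> G \<subset> G'"
proof -
  have unique: "\<And>x a b. (x, a) \<in> G \<Longrightarrow> (x, b) \<in> G \<Longrightarrow> a = b"
    and add: "\<And>x a y b. (x, a) \<in> G \<Longrightarrow> (y, b) \<in> G \<Longrightarrow> (x + y, a + b) \<in> G"
    and scale: "\<And>x a c. (x, a) \<in> G \<Longrightarrow> (sc (of_real c) x, c * a) \<in> G"
    and "(x0, q x0) \<in> G"
    using G unfolding dominated_graph_def by blast+
  have zero: "(0, 0) \<in> G"
    using scale[OF \<open>(x0, q x0) \<in> G\<close>, of 0] by simp
  obtain \<alpha> where up: "\<And>y a. (y, a) \<in> G \<Longrightarrow> a - q (y - x1) \<le> \<alpha>"
    and lo: "\<And>y b. (y, b) \<in> G \<Longrightarrow> \<alpha> \<le> q (y + x1) - b"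
    using dominated_graph_extension_value[OF G] by blast
  define G' where "G' = {(y + sc (of_real c) x1, a + c * \<alpha>) | y a c. (y, a) \<in> G}"
  have G'I: "(y + sc (of_real c) x1, a + c * \<alpha>) \<in> G'" if "(y, a) \<in> G" for y a c
    unfolding G'_def using that by blast
  have "G \<subseteq> G'"
    using G'I[of _ _ 0] by auto
  moreover have "(x1, \<alpha>) \<in> G'"
    using G'I[OF zero, of 1] by simp
  moreover have "dominated_graph x0 G'"
    unfolding dominated_graph_def
  proof (intro conjI allI impI)
    fix x a b assume "(x, a) \<in> G'" "(x, b) \<in> G'"
    then obtain y1 a1 c1 y2 a2 c2 where 1: "x = y1 + sc (of_real c1) x1" "a = a1 + c1 * \<alpha>" "(y1, a1) \<in> G"
      and 2: "x = y2 + sc (of_real c2) x1" "b = a2 + c2 * \<alpha>" "(y2, a2) \<in> G"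
      unfolding G'_def by blast
    have "c1 = c2"
      using dominated_graph_extension_coeff_eq[OF G x1 1(3) 2(3)] 1(1) 2(1) by simp
    with 1 2 unique show "a = b"
      by auto
  next
    show "(x0, q x0) \<in> G'"
      using \<open>G \<subseteq> G'\<close> \<open>(x0, q x0) \<in> G\<close> by blast
  next
    fix x a y b assume "(x, a) \<in> G'" "(y, b) \<in> G'"
    then obtain y1 a1 c1 y2 a2 c2 where 1: "x = y1 + sc (of_real c1) x1" "a = a1 + c1 * \<alpha>" "(y1, a1) \<in> G"
      and 2: "y = y2 + sc (of_real c2) x1" "b = a2 + c2 * \<alpha>" "(y2, a2) \<in> G"
      unfolding G'_def by blast
    have "x + y = (y1 + y2) + sc (of_real (c1 + c2)) x1" "a + b = (a1 + a2) + (c1 + c2) * \<alpha>"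
      using 1 2 by (simp_all add: sc_add_left algebra_simps)
    then show "(x + y, a + b) \<in> G'"
      using G'I[OF add[OF 1(3) 2(3)], of "c1 + c2"] by simp
  next
    fix x a d assume "(x, a) \<in> G'"
    then obtain y a1 c where 1: "x = y + sc (of_real c) x1" "a = a1 + c * \<alpha>" "(y, a1) \<in> G"
      unfolding G'_def by blast
    have "sc (of_real d) x = sc (of_real d) y + sc (of_real (d * c)) x1" "d * a = d * a1 + (d * c) * \<alpha>"
      using 1 by (simp_all add: sc_add_right algebra_simps)
    then show "(sc (of_real d) x, d * a) \<in> G'"
      using G'I[OF scale[OF 1(3)], of d "d * c"] by simp
  next
    fix x a assume "(x, a) \<in> G'"
    then obtain y a1 c where "x = y + sc (of_real c) x1" "a = a1 + c * \<alpha>" "(y, a1) \<in> G"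
      unfolding G'_def by blast
    then show "a \<le> q x"
      using dominated_graph_extension_le[OF G _ up lo] by blast
  qed
  ultimately show ?thesis
    using x1 by blast
qed

theorem real_hahn_banach:
  obtains l where "\<And>x y. l (x + y) = l x + l y" and "\<And>c x. l (sc (of_real c) x) = c * l x"
    and "\<And>x. l x \<le> q x" and "l x0 = q x0"
proof -
  obtain M where "dominated_graph x0 M"
    and maximal: "\<And>G. dominated_graph x0 G \<Longrightarrow> M \<subseteq> G \<Longrightarrow> G = M"
    using subset_Zorn_nonempty[of "{G. dominated_graph x0 G}"]
      dominated_graph_line dominated_graph_Union_chain by (metis (no_types, lifting) empty_iff mem_Collect_eq)
  then have unique: "\<And>x a b. (x, a) \<in> M \<Longrightarrow> (x, b) \<in> M \<Longrightarrow> a = b"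
    and add: "\<And>x a y b. (x, a) \<in> M \<Longrightarrow> (y, b) \<in> M \<Longrightarrow> (x + y, a + b) \<in> M"
    and scale: "\<And>x a c. (x, a) \<in> M \<Longrightarrow> (sc (of_real c) x, c * a) \<in> M"
    and le: "\<And>x a. (x, a) \<in> M \<Longrightarrow> a \<le> q x" and "(x0, q x0) \<in> M"
    unfolding dominated_graph_def by blast+
  have "\<exists>a. (x, a) \<in> M" for x
    using dominated_graph_extend[OF \<open>dominated_graph x0 M\<close>, of x] maximal by blast
  then obtain l where l: "\<And>x. (x, l x) \<in> M"
    by metis
  have l_eq: "l x = a" if "(x, a) \<in> M" for x a
    using unique[OF l that] .
  show ?thesis
  proof
    show "l (x + y) = l x + l y" for x y
      using l_eq[OF add[OF l l]] .
    show "l (sc (of_real c) x) = c * l x" for c x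
      using l_eq[OF scale[OF l]] .
    show "l x \<le> q x" for x
      using le[OF l] .
    show "l x0 = q x0"
      using l_eq[OF \<open>(x0, q x0) \<in> M\<close>] .
  qed
qed

end

lemma (in seminormed) exists_dual_functional:
  assumes "q \<in> P"
  obtains e where "e \<in> dual_space sc P" and "Re (e x0) = q x0"
proof -
  obtain l where add: "\<And>x y. l (x + y) = l x + l y" and scale: "\<And>c x. l (sc (of_real c) x) = c * l x"
    and le: "\<And>x. l x \<le> q x" and "l x0 = q x0"
    using real_hahn_banach by blast
  have abs_le: "\<bar>l x\<bar> \<le> q x" for x
    using le[of x] le[of "- x"] scale[of "- 1" x] by (simp add: sc_minus_left)
  \<comment> \<open>complexification of l\<close>
  define e where "e x = Complex (l x) (- l (sc \<i> x))" for x
  have e_add: "e (x + y) = e x + e y" for x y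
    unfolding e_def by (simp add: add sc_add_right complex_eq_iff)
  have l_sc: "l (sc c x) = Re c * l x + Im c * l (sc \<i> x)" for c x
  proof -
    have "c = of_real (Re c) + of_real (Im c) * \<i>"
      by (simp add: complex_eq_iff)
    then have "sc c x = sc (of_real (Re c)) x + sc (of_real (Im c)) (sc \<i> x)"
      by (metis sc_add_left sc_sc)
    then show ?thesis
      by (simp only: add scale)
  qed
  have e_sc: "e (sc c x) = c * e x" for c x
    using l_sc[of c x] l_sc[of "\<i> * c" x] unfolding e_def by (simp add: complex_eq_iff algebra_simps)
  have e_diff: "e y - e x = e (y - x)" for x y
    using e_add[of "y - x" x] by simp
  have "dist (e y) (e x) \<le> 2 * q (y - x)" for x y
  proof -
    have "cmod (e (y - x)) \<le> \<bar>l (y - x)\<bar> + \<bar>l (sc \<i> (y - x))\<bar>"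
      using cmod_le[of "e (y - x)"] unfolding e_def by simp
    also have "\<dots> \<le> 2 * q (y - x)"
      using abs_le[of "y - x"] abs_le[of "sc \<i> (y - x)"] by simp
    finally show ?thesis
      by (simp add: dist_norm e_diff)
  qed
  then have "continuous_map (lc_topology P) euclidean e"
    by (intro continuous_map_lc_topologyI[OF assms, of 2]) auto
  with e_add e_sc have "e \<in> dual_space sc P"
    unfolding dual_space_def by blast
  moreover have "Re (e x0) = q x0"
    unfolding e_def using \<open>l x0 = q x0\<close> by simp
  ultimately show ?thesis
    using that by blast
qed

lemma (in complex_vector_structure) dual_space_separates_points:
  assumes "\<forall>q\<in>P. seminorm_on sc q" and "Hausdorff_space (lc_topology P)" and "z \<noteq> k"
  obtains e where "e \<in> dual_space sc P" and "Re (e k) < Re (e z)"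
proof -
  obtain q where "q \<in> P" "q (k - z) \<noteq> 0"
    using Hausdorff_lc_topology_seminorm_nonzero[OF assms(2,3)] by blast
  then interpret seminormed sc q
    using assms(1) by unfold_locales blast
  obtain e where e: "e \<in> dual_space sc P" "Re (e (z - k)) = q (z - k)"
    using exists_dual_functional[OF \<open>q \<in> P\<close>] by blast
  have "e z = e (z - k) + e k"
    using e(1) unfolding dual_space_def by (metis (mono_tags, lifting) diff_add_cancel mem_Collect_eq)
  moreover have "q (z - k) > 0"
    using \<open>q (k - z) \<noteq> 0\<close> seminorm_nonneg[of "z - k"] seminorm_diff_commute[of z k] by simp
  ultimately show ?thesis
    using that e by simp
qed

lemma openin_dual_halfspace_gt:
  assumes "e \<in> dual_space sc P"
  shows "openin (lc_topology P) {w. Re (e w) > b}"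
  using openin_continuous_map_preimage[of "lc_topology P" euclidean e "{z. Re z > b}"]
    assms open_halfspace_Re_gt unfolding dual_space_def by auto

lemma closedin_dual_halfspace_ge:
  assumes "e \<in> dual_space sc P"
  shows "closedin (lc_topology P) {w. Re (e w) \<ge> b}"
  using closedin_continuous_map_preimage[of "lc_topology P" euclidean e "{z. Re z \<ge> b}"]
    assms closed_halfspace_Re_ge unfolding dual_space_def by auto

section \<open>Multipliers and cutoff polynomials\<close>

context complex_vector_structure
begin

lemma is_multiplier_one: "is_multiplier sc (\<lambda>x. 1) W"
  unfolding is_multiplier_def by simp

lemma is_multiplier_one_minus:
  assumes "is_multiplier sc \<phi> W"
  shows "is_multiplier sc (\<lambda>x. 1 - \<phi> x) W"
  using assms unfolding is_multiplier_def by (simp add: add.commute)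

lemma is_multiplier_mult:
  assumes \<phi>: "is_multiplier sc \<phi> W" and \<psi>: "is_multiplier sc \<psi> W"
  shows "is_multiplier sc (\<lambda>x. \<phi> x * \<psi> x) W"
  unfolding is_multiplier_def
proof (intro ballI)
  fix f g assume "f \<in> W" "g \<in> W"
  then have "(\<lambda>x. sc (\<psi> x) (f x) + sc (1 - \<psi> x) (g x)) \<in> W"
    using \<psi> unfolding is_multiplier_def by blast
  moreover have "\<And>f g. f \<in> W \<Longrightarrow> g \<in> W \<Longrightarrow> (\<lambda>x. sc (\<phi> x) (f x) + sc (1 - \<phi> x) (g x)) \<in> W"
    using \<phi> unfolding is_multiplier_def by blast
  ultimately have "(\<lambda>x. sc (\<phi> x) (sc (\<psi> x) (f x) + sc (1 - \<psi> x) (g x)) + sc (1 - \<phi> x) (g x)) \<in> W"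
    using \<open>g \<in> W\<close> by blast
  moreover have "sc (\<phi> x) (sc (\<psi> x) (f x) + sc (1 - \<psi> x) (g x)) + sc (1 - \<phi> x) (g x)
      = sc (\<phi> x * \<psi> x) (f x) + sc (1 - \<phi> x * \<psi> x) (g x)" for x
  proof -
    have "sc (\<phi> x * (1 - \<psi> x)) (g x) + sc (1 - \<phi> x) (g x) = sc (1 - \<phi> x * \<psi> x) (g x)"
      by (simp add: sc_add_left[symmetric] algebra_simps)
    then show ?thesis
      by (simp add: sc_add_right add.assoc)
  qed
  ultimately show "(\<lambda>x. sc (\<phi> x * \<psi> x) (f x) + sc (1 - \<phi> x * \<psi> x) (g x)) \<in> W"
    by simp
qed

lemma is_multiplier_power:
  assumes "is_multiplier sc \<phi> W"
  shows "is_multiplier sc (\<lambda>x. \<phi> x ^ n) W"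
  by (induction n) (simp_all add: is_multiplier_one is_multiplier_mult[OF assms])

end

text \<open>For large n and then large m, (1 - t^n)^m is close to 1 for t \<le> c1 (Bernoulli's inequality,
  as m c1^n is small) and close to 0 for t \<ge> c2 (as (1 - c2^n)^m \<le> exp (- m c2^n)).\<close>

lemma cutoff_power_real:
  fixes c1 c2 \<eta> :: real
  assumes "0 \<le> c1" and "c1 < c2" and "c2 \<le> 1" and "\<eta> > 0"
  obtains n m :: nat where "\<And>t::real. 0 \<le> t \<Longrightarrow> t \<le> 1 \<Longrightarrow> t \<le> c1 \<Longrightarrow> 1 - \<eta> \<le> (1 - t ^ n) ^ m"
    and "\<And>t::real. t \<le> 1 \<Longrightarrow> c2 \<le> t \<Longrightarrow> (1 - t ^ n) ^ m \<le> \<eta>"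
proof -
  have "c2 > 0"
    using assms by simp
  define a where "a = c1 / c2"
  have "0 \<le> a" "a < 1" "c1 \<le> a"
    using assms \<open>c2 > 0\<close> by (auto simp: a_def field_simps intro: mult_left_le)
  define K where "K = 2 / \<eta>"
  have "K > 0"
    using assms by (simp add: K_def)
  obtain n0 where "a ^ n0 < \<eta> / (K + 1)"
    using real_arch_pow_inv[of "\<eta> / (K + 1)" a] \<open>\<eta> > 0\<close> \<open>K > 0\<close> \<open>a < 1\<close> by auto
  define n where "n = Suc n0"
  have an: "a ^ n < \<eta> / (K + 1)"
    using \<open>a ^ n0 < _\<close> \<open>0 \<le> a\<close> \<open>a < 1\<close> power_decreasing[of n0 n a] unfolding n_def by simp
  have "c2 ^ n > 0"
    using \<open>c2 > 0\<close> by simp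
  define m where "m = nat \<lceil>K / c2 ^ n\<rceil>"
  have m_ge: "K / c2 ^ n \<le> real m" and m_less: "real m < K / c2 ^ n + 1"
    unfolding m_def using \<open>K > 0\<close> \<open>c2 ^ n > 0\<close> by (simp_all add: of_nat_nat) linarith+
  show ?thesis
  proof
    fix t :: real assume "0 \<le> t" "t \<le> 1" "t \<le> c1"
    have "1 - real m * t ^ n \<le> (1 - t ^ n) ^ m"
      using Bernoulli_inequality[of "- (t ^ n)" m] \<open>0 \<le> t\<close> \<open>t \<le> 1\<close> by (simp add: power_le_one)
    moreover have "real m * t ^ n \<le> \<eta>"
    proof -
      have "real m * t ^ n \<le> (K / c2 ^ n + 1) * c1 ^ n"
        using m_less \<open>0 \<le> t\<close> \<open>t \<le> c1\<close> by (intro mult_mono power_mono) auto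
      also have "\<dots> = K * a ^ n + c1 ^ n"
        using \<open>c2 ^ n > 0\<close> by (simp add: a_def power_divide field_simps)
      also have "\<dots> \<le> (K + 1) * a ^ n"
        using \<open>c1 \<le> a\<close> \<open>0 \<le> c1\<close> by (simp add: power_mono algebra_simps)
      also have "\<dots> \<le> \<eta>"
        using an \<open>K > 0\<close> by (simp add: field_simps)
      finally show ?thesis .
    qed
    ultimately show "1 - \<eta> \<le> (1 - t ^ n) ^ m"
      by simp
  next
    fix t :: real assume "t \<le> 1" "c2 \<le> t"
    have "(1 - t ^ n) ^ m \<le> (1 - c2 ^ n) ^ m"
      using \<open>t \<le> 1\<close> \<open>c2 \<le> t\<close> \<open>c2 > 0\<close> by (intro power_mono) (auto simp: power_mono power_le_one)
    also have "\<dots> \<le> exp (- (c2 ^ n)) ^ m"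
      using exp_ge_add_one_self[of "- (c2 ^ n)"] assms \<open>c2 > 0\<close> by (intro power_mono) (auto simp: power_le_one)
    also have "\<dots> = exp (- (real m * c2 ^ n))"
      by (simp flip: exp_of_nat_mult)
    also have "\<dots> \<le> exp (- K)"
      using m_ge \<open>c2 ^ n > 0\<close> by (simp add: field_simps)
    also have "\<dots> \<le> 1 / K"
    proof -
      have "K \<le> exp K"
        using exp_ge_add_one_self[of K] by linarith
      then show ?thesis
        using \<open>K > 0\<close> by (simp add: exp_minus inverse_eq_divide frac_le)
    qed
    also have "\<dots> \<le> \<eta>"
      using assms by (simp add: K_def)
    finally show "(1 - t ^ n) ^ m \<le> \<eta>" .
  qed
qed

lemma cutoff_power_near_unit_interval:
  fixes c1 c2 \<eta> :: real
  assumes "0 \<le> c1" and "c1 < c2" and "c2 \<le> 1" and "\<eta> > 0"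
  obtains n m :: nat and \<delta> :: real where "\<delta> > 0"
    and "\<And>z t. 0 \<le> t \<Longrightarrow> t \<le> 1 \<Longrightarrow> cmod (z - of_real t) < \<delta> \<Longrightarrow>
      cmod ((1 - z ^ n) ^ m) + cmod (1 - (1 - z ^ n) ^ m) \<le> 1 + \<eta> \<and>
      (Re z < c1 \<longrightarrow> cmod (1 - (1 - z ^ n) ^ m) \<le> \<eta>) \<and> (c2 < Re z \<longrightarrow> cmod ((1 - z ^ n) ^ m) \<le> \<eta>)"
proof -
  define d where "d = (c2 - c1) / 4"
  have "d > 0" "d < 1"
    using assms by (simp_all add: d_def)
  obtain n m :: nat where low: "\<And>t::real. 0 \<le> t \<Longrightarrow> t \<le> 1 \<Longrightarrow> t \<le> c1 + d \<Longrightarrow> 1 - \<eta> / 2 \<le> (1 - t ^ n) ^ m"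
    and high: "\<And>t::real. t \<le> 1 \<Longrightarrow> c2 - d \<le> t \<Longrightarrow> (1 - t ^ n) ^ m \<le> \<eta> / 2"
  proof -
    have "0 \<le> c1 + d" "c1 + d < c2 - d" "c2 - d \<le> 1" "\<eta> / 2 > 0"
      using assms \<open>d > 0\<close> by (simp_all add: d_def field_simps)
    then show ?thesis
      using cutoff_power_real that by blast
  qed
  have "uniformly_continuous_on (cball (0::complex) 2) (\<lambda>z. (1 - z ^ n) ^ m)"
    by (intro compact_uniformly_continuous continuous_intros compact_cball)
  moreover have "\<eta> / 2 > 0"
    using \<open>\<eta> > 0\<close> by simp
  ultimately obtain \<delta> where "\<delta> > 0" and unif: "\<And>z w :: complex. z \<in> cball 0 2 \<Longrightarrow> w \<in> cball 0 2 \<Longrightarrow> dist w z < \<delta> \<Longrightarrow>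
      dist ((1 - w ^ n) ^ m) ((1 - z ^ n) ^ m) < \<eta> / 2"
    by (rule uniformly_continuous_onE) blast
  show ?thesis
  proof (rule that[of "min \<delta> d"])
    show "min \<delta> d > 0"
      using \<open>\<delta> > 0\<close> \<open>d > 0\<close> by simp
    fix z :: complex and t :: real
    assume t: "0 \<le> t" "t \<le> 1" and near: "cmod (z - of_real t) < min \<delta> d"
    define R where "R = (1 - t ^ n) ^ m"
    define Q where "Q = (1 - z ^ n) ^ m"
    have "0 \<le> R" "R \<le> 1"
      using t by (simp_all add: R_def power_le_one)
    have "of_real t \<in> cball (0::complex) 2" "z \<in> cball 0 2"
      using t near norm_triangle_sub[of z "of_real t"] \<open>d < 1\<close> by (auto simp: dist_norm)
    then have QR: "cmod (Q - of_real R) < \<eta> / 2"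
      using unif[of "of_real t" z] near by (simp add: Q_def R_def dist_norm)
    have Q_le: "cmod Q \<le> R + \<eta> / 2"
      using norm_triangle_sub[of Q "of_real R"] QR \<open>0 \<le> R\<close> by simp
    have "cmod (1 - of_real R) = 1 - R"
      using \<open>R \<le> 1\<close> by (metis abs_of_nonneg diff_ge_0_iff_ge norm_of_real of_real_1 of_real_diff)
    then have one_minus_Q_le: "cmod (1 - Q) \<le> (1 - R) + \<eta> / 2"
      using norm_triangle_ineq4[of "of_real (1 - R)" "Q - of_real R"] QR by simp
    have "\<bar>Re z - t\<bar> < d"
      using abs_Re_le_cmod[of "z - of_real t"] near by simp
    then have "Re z < c1 \<Longrightarrow> t \<le> c1 + d" and "c2 < Re z \<Longrightarrow> c2 - d \<le> t"
      by (simp_all add: abs_less_iff)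
    then show "cmod Q + cmod (1 - Q) \<le> 1 + \<eta> \<and> (Re z < c1 \<longrightarrow> cmod (1 - Q) \<le> \<eta>) \<and> (c2 < Re z \<longrightarrow> cmod Q \<le> \<eta>)"
      using Q_le one_minus_Q_le low[OF t] high[OF t(2)] unfolding R_def by auto
  qed
qed

lemma zero_set_UNIV: "zero_set UNIV"
  unfolding zero_set_def by (rule exI[of _ "\<lambda>x. 0"]) auto

lemma zero_set_Int:
  assumes "zero_set A" and "zero_set B"
  shows "zero_set (A \<inter> B)"
proof -
  obtain h1 h2 :: "'a \<Rightarrow> real" where "continuous_on UNIV h1" "A = h1 -` {0}"
    and "continuous_on UNIV h2" "B = h2 -` {0}"
    using assms unfolding zero_set_def by blast
  then have "continuous_on UNIV (\<lambda>x. \<bar>h1 x\<bar> + \<bar>h2 x\<bar>)" and "A \<inter> B = (\<lambda>x. \<bar>h1 x\<bar> + \<bar>h2 x\<bar>) -` {0}"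
    by (auto intro!: continuous_intros)
  then show ?thesis
    unfolding zero_set_def by blast
qed

lemma zero_set_Re_le:
  assumes "continuous_on UNIV \<phi>"
  shows "zero_set {x. Re (\<phi> x) \<le> c}"
proof -
  have "continuous_on UNIV (\<lambda>x. max 0 (Re (\<phi> x) - c))" and "{x. Re (\<phi> x) \<le> c} = (\<lambda>x. max 0 (Re (\<phi> x) - c)) -` {0}"
    using assms by (auto intro!: continuous_intros)
  then show ?thesis
    unfolding zero_set_def by blast
qed

lemma zero_set_Re_ge:
  assumes "continuous_on UNIV \<phi>"
  shows "zero_set {x. c \<le> Re (\<phi> x)}"
proof -
  have "continuous_on UNIV (\<lambda>x. max 0 (c - Re (\<phi> x)))" and "{x. c \<le> Re (\<phi> x)} = (\<lambda>x. max 0 (c - Re (\<phi> x))) -` {0}"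
    using assms by (auto intro!: continuous_intros)
  then show ?thesis
    unfolding zero_set_def by blast
qed

lemma z_filter_singleton_UNIV: "z_filter {UNIV}"
  unfolding z_filter_def using zero_set_UNIV by auto

lemma z_filter_UNIV:
  assumes "z_filter M"
  shows "UNIV \<in> M"
  using assms zero_set_UNIV unfolding z_filter_def by blast

lemma z_filter_Int:
  assumes "z_filter M" and "F \<in> M" and "G \<in> M"
  shows "F \<inter> G \<in> M"
  using assms unfolding z_filter_def by blast

lemma z_filter_Inter:
  assumes "z_filter M" and "finite S" and "S \<subseteq> M"
  shows "\<Inter>S \<in> M"
  using assms(2,3)
  by (induction S rule: finite_induct) (simp_all add: z_filter_UNIV[OF assms(1)] z_filter_Int[OF assms(1)])

lemma z_filter_common_closure_point:
  fixes \<phi> :: "'a::topological_space \<Rightarrow> 'b::heine_borel"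
  assumes M: "z_filter M" and "F0 \<in> M" and "bounded (\<phi> ` (F0 \<inter> S))"
    and "closed Q" and meets: "\<And>F. F \<in> M \<Longrightarrow> \<exists>x\<in>F \<inter> S. \<phi> x \<in> Q"
  shows "\<exists>z\<in>Q. \<forall>F\<in>M. z \<in> closure (\<phi> ` (F \<inter> S))"
proof -
  define T where "T F = closure (\<phi> ` (F \<inter> F0 \<inter> S)) \<inter> Q" for F
  have "closure (\<phi> ` (F0 \<inter> S)) \<inter> \<Inter>(T ` M) \<noteq> {}"
  proof (rule compact_imp_fip_image)
    show "compact (closure (\<phi> ` (F0 \<inter> S)))"
      using assms(3) by (simp add: compact_eq_bounded_closed bounded_closure)
    show "closed (T F)" for F
      unfolding T_def using \<open>closed Q\<close> by blast
    fix I assume "finite I" "I \<subseteq> M"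
    then have "\<Inter>I \<inter> F0 \<in> M"
      using z_filter_Int[OF M z_filter_Inter[OF M] \<open>F0 \<in> M\<close>] by blast
    then obtain x where "x \<in> \<Inter>I \<inter> F0 \<inter> S" "\<phi> x \<in> Q"
      using meets by blast
    then have "\<phi> x \<in> closure (\<phi> ` (F0 \<inter> S)) \<inter> (\<Inter>F\<in>I. T F)"
      unfolding T_def by (auto intro!: closure_subset[THEN subsetD])
    then show "closure (\<phi> ` (F0 \<inter> S)) \<inter> (\<Inter>F\<in>I. T F) \<noteq> {}"
      by blast
  qed
  then obtain z where z: "\<And>F. F \<in> M \<Longrightarrow> z \<in> T F"
    by blast
  have "z \<in> Q"
    using z[OF \<open>F0 \<in> M\<close>] unfolding T_def by blast
  moreover have "z \<in> closure (\<phi> ` (F \<inter> S))" if "F \<in> M" for F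
    using z[OF that] closure_mono[of "\<phi> ` (F \<inter> F0 \<inter> S)" "\<phi> ` (F \<inter> S)"] unfolding T_def by blast
  ultimately show ?thesis
    by blast
qed

lemma z_filter_Union_chain:
  assumes "\<C> \<noteq> {}" and "subset.chain {M. z_filter M} \<C>"
  shows "z_filter (\<Union>\<C>)"
proof -
  have zf: "\<And>M. M \<in> \<C> \<Longrightarrow> z_filter M"
    and chain: "\<And>M N. M \<in> \<C> \<Longrightarrow> N \<in> \<C> \<Longrightarrow> M \<subseteq> N \<or> N \<subseteq> M"
    using assms(2) unfolding subset_chain_def by blast+
  show ?thesis
    unfolding z_filter_def
  proof (intro conjI ballI allI impI)
    obtain M where "M \<in> \<C>"
      using assms(1) by blast
    then show "\<Union>\<C> \<noteq> {}"
      using zf[of M] unfolding z_filter_def by blast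
  next
    show "zero_set F" if "F \<in> \<Union>\<C>" for F
      using that zf unfolding z_filter_def by blast
  next
    show "{} \<notin> \<Union>\<C>"
      using zf unfolding z_filter_def by blast
  next
    fix F G assume "F \<in> \<Union>\<C>" "G \<in> \<Union>\<C>"
    then obtain M N where "M \<in> \<C>" "F \<in> M" "N \<in> \<C>" "G \<in> N"
      by blast
    then show "F \<inter> G \<in> \<Union>\<C>"
      using chain[of M N] z_filter_Int[OF zf[of M]] z_filter_Int[OF zf[of N]] by blast
  next
    fix F Z assume "F \<in> \<Union>\<C>" "zero_set Z \<and> F \<subseteq> Z"
    then obtain M where "M \<in> \<C>" "F \<in> M" "zero_set Z" "F \<subseteq> Z"
      by blast
    then show "Z \<in> \<Union>\<C>"
      using zf[of M] unfolding z_filter_def by blast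
  qed
qed

section \<open>Concentration along antisymmetric z-filters\<close>

lemma compactin_closure_of_filter_cluster_point:
  assumes "compactin X (X closure_of range h)" and "range h \<subseteq> topspace X" and M: "z_filter M"
    and meets: "\<And>F. F \<in> M \<Longrightarrow> F \<inter> S \<noteq> {}"
  obtains k where "\<And>F. F \<in> M \<Longrightarrow> k \<in> X closure_of (h ` (F \<inter> S))"
proof -
  define cl where "cl F = X closure_of (h ` (F \<inter> S))" for F
  have "\<forall>C\<in>cl ` M. closedin X C"
    by (simp add: cl_def)
  moreover have "(X closure_of range h) \<inter> \<Inter>\<G> \<noteq> {}" if G: "finite \<G>" "\<G> \<subseteq> cl ` M" for \<G>
  proof -
    obtain I where "I \<subseteq> M" "finite I" "\<G> = cl ` I"
      using finite_subset_image[OF G] by blast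
    then have "\<Inter>I \<in> M"
      using z_filter_Inter[OF M] by blast
    then obtain x where "x \<in> \<Inter>I" "x \<in> S"
      using meets by blast
    have "h x \<in> cl F" if "F \<in> I" for F
      using closure_of_subset[of "h ` (F \<inter> S)" X] assms(2) \<open>x \<in> \<Inter>I\<close> \<open>x \<in> S\<close> that
      unfolding cl_def by blast
    moreover have "h x \<in> X closure_of range h"
      using closure_of_subset[OF assms(2)] by blast
    ultimately show ?thesis
      using \<open>\<G> = cl ` I\<close> by blast
  qed
  ultimately have "(X closure_of range h) \<inter> \<Inter>(cl ` M) \<noteq> {}"
    using assms(1) unfolding compactin_fip by blast
  then show ?thesis
    using that unfolding cl_def by blast
qed

context complex_vector_structure
begin

lemma beta_separates_cluster_point:
  assumes "\<forall>q\<in>P. seminorm_on sc q" and "Hausdorff_space (lc_topology P)"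
    and sep: "beta_separates sc P A v h" and anti: "antisymmetric_zf A v M"
    and k: "\<And>F. F \<in> M \<Longrightarrow> k \<in> lc_topology P closure_of (h ` (F \<inter> supp v))" and "z \<noteq> k"
  obtains U F where "openin (lc_topology P) U" and "z \<in> U" and "F \<in> M"
    and "\<And>x. x \<in> F \<inter> supp v \<Longrightarrow> h x \<notin> U"
proof -
  obtain e where e: "e \<in> dual_space sc P" and "Re (e k) < Re (e z)"
    using dual_space_separates_points[OF assms(1,2) \<open>z \<noteq> k\<close>] by blast
  define a where "a = (2 * Re (e k) + Re (e z)) / 3"
  define b where "b = (Re (e k) + 2 * Re (e z)) / 3"
  have "Re (e k) < a" "a < b" "b < Re (e z)"
    using \<open>Re (e k) < Re (e z)\<close> by (simp_all add: a_def b_def)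
  then obtain F where "F \<in> M"
    and "F \<inter> {x\<in>supp v. Re (e (h x)) \<le> a} = {} \<or> F \<inter> {x\<in>supp v. Re (e (h x)) \<ge> b} = {}"
    using sep anti e unfolding beta_separates_def by blast
  moreover have "F \<inter> {x\<in>supp v. Re (e (h x)) \<le> a} \<noteq> {}" if "F \<in> M"
  proof
    assume "F \<inter> {x\<in>supp v. Re (e (h x)) \<le> a} = {}"
    then have "h ` (F \<inter> supp v) \<subseteq> {w. a \<le> Re (e w)}"
      by fastforce
    then have "lc_topology P closure_of (h ` (F \<inter> supp v)) \<subseteq> {w. a \<le> Re (e w)}"
      using closure_of_minimal closedin_dual_halfspace_ge[OF e] by blast
    with k[OF that] \<open>Re (e k) < a\<close> show False
      by auto
  qed
  ultimately have "\<And>x. x \<in> F \<inter> supp v \<Longrightarrow> h x \<notin> {w. b < Re (e w)}"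
    by fastforce
  then show ?thesis
    using that[OF openin_dual_halfspace_gt[OF e]] \<open>b < Re (e z)\<close> \<open>F \<in> M\<close> by blast
qed

text \<open>Compactness of the closure of the range of h turns the separation of each point far from
  the cluster point k into a single member of M on which h stays close to k.\<close>

lemma antisymmetric_zf_concentrates:
  assumes P: "\<forall>q\<in>P. seminorm_on sc q" and "p \<in> P" and H: "Hausdorff_space (lc_topology P)"
    and cpt: "compactin (lc_topology P) (lc_topology P closure_of range h)"
    and sep: "beta_separates sc P A v h" and anti: "antisymmetric_zf A v M" and "\<epsilon> > 0"
  obtains k F where "F \<in> M" and "\<And>x. x \<in> F \<inter> supp v \<Longrightarrow> p (h x - k) < \<epsilon>"
proof -
  let ?X = "lc_topology P" and ?K = "lc_topology P closure_of range h"
  interpret seminormed sc p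
    using P \<open>p \<in> P\<close> by unfold_locales blast
  have M: "z_filter M" and "\<And>F. F \<in> M \<Longrightarrow> F \<inter> supp v \<noteq> {}"
    using anti unfolding antisymmetric_zf_def by blast+
  then obtain k where k: "\<And>F. F \<in> M \<Longrightarrow> k \<in> ?X closure_of (h ` (F \<inter> supp v))"
    using compactin_closure_of_filter_cluster_point[OF cpt] by (metis top_greatest topspace_lc_topology)
  define C where "C = ?K \<inter> {w. \<epsilon> \<le> p (w - k)}"
  have "closedin ?X {w. \<epsilon> \<le> p (w - k)}"
    using closedin_continuous_map_preimage[OF continuous_map_seminorm[OF \<open>p \<in> P\<close>], of "{\<epsilon>..}"] by simp
  then have "closedin ?X C"
    unfolding C_def by (intro closedin_Int closedin_closure_of)
  then have "compactin ?X C"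
    using closed_compactin[OF cpt] unfolding C_def by blast
  define \<U> where "\<U> = {U. openin ?X U \<and> (\<exists>F\<in>M. \<forall>x\<in>F \<inter> supp v. h x \<notin> U)}"
  have "C \<subseteq> \<Union>\<U>"
  proof
    fix z assume "z \<in> C"
    then have "z \<noteq> k"
      using \<open>\<epsilon> > 0\<close> unfolding C_def by auto
    then obtain U F where "openin ?X U" "z \<in> U" "F \<in> M" "\<And>x. x \<in> F \<inter> supp v \<Longrightarrow> h x \<notin> U"
      using beta_separates_cluster_point[OF P H sep anti k] by metis
    then show "z \<in> \<Union>\<U>"
      unfolding \<U>_def by blast
  qed
  moreover have "\<forall>U\<in>\<U>. openin ?X U"
    unfolding \<U>_def by blast
  ultimately obtain \<V> where "finite \<V>" "\<V> \<subseteq> \<U>" "C \<subseteq> \<Union>\<V>"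
    using \<open>compactin ?X C\<close> unfolding compactin_def by meson
  then have "\<forall>U\<in>\<V>. \<exists>F. F \<in> M \<and> (\<forall>x\<in>F \<inter> supp v. h x \<notin> U)"
    unfolding \<U>_def by blast
  then obtain FU where FU: "\<And>U. U \<in> \<V> \<Longrightarrow> FU U \<in> M \<and> (\<forall>x\<in>FU U \<inter> supp v. h x \<notin> U)"
    by metis
  show ?thesis
  proof
    show "\<Inter>(FU ` \<V>) \<in> M"
      using FU \<open>finite \<V>\<close> by (intro z_filter_Inter[OF M]) auto
    fix x assume x: "x \<in> \<Inter>(FU ` \<V>) \<inter> supp v"
    show "p (h x - k) < \<epsilon>"
    proof (rule ccontr)
      assume "\<not> p (h x - k) < \<epsilon>"
      then have "h x \<in> C"
        unfolding C_def using closure_of_subset[of "range h" ?X] by auto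
      then obtain U where "U \<in> \<V>" "h x \<in> U"
        using \<open>C \<subseteq> \<Union>\<V>\<close> by blast
      with x FU show False
        by blast
    qed
  qed
qed

end

section \<open>Maximal z-filters keeping f away from W\<close>

text \<open>dist_ge_on v p f W d F expresses d \<le> d_{v,p,F}(f, W), the distance of f from W
  measured on F only.\<close>

definition dist_ge_on :: "('a \<Rightarrow> real) \<Rightarrow> ('x::ab_group_add \<Rightarrow> real) \<Rightarrow> ('a \<Rightarrow> 'x) \<Rightarrow> ('a \<Rightarrow> 'x) set \<Rightarrow>
    real \<Rightarrow> 'a set \<Rightarrow> bool" where
  "dist_ge_on v p f W d F \<longleftrightarrow> (\<forall>r<d. \<forall>g\<in>W. \<exists>x\<in>F. r < v x * p (f x - g x))"

definition distant_z_filter :: "('a::topological_space \<Rightarrow> real) \<Rightarrow> ('x::ab_group_add \<Rightarrow> real) \<Rightarrow>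
    ('a \<Rightarrow> 'x) \<Rightarrow> ('a \<Rightarrow> 'x) set \<Rightarrow> real \<Rightarrow> 'a set set \<Rightarrow> bool" where
  "distant_z_filter v p f W d M \<longleftrightarrow> z_filter M \<and> (\<forall>F\<in>M. dist_ge_on v p f W d F)"

lemma maximal_distant_z_filter_exists:
  assumes "dist_ge_on v p f W d UNIV"
  obtains M where "distant_z_filter v p f W d M"
    and "\<And>M'. distant_z_filter v p f W d M' \<Longrightarrow> M \<subseteq> M' \<Longrightarrow> M' = M"
proof -
  have "{UNIV} \<in> {M. distant_z_filter v p f W d M}"
    using assms z_filter_singleton_UNIV unfolding distant_z_filter_def by simp
  moreover have "\<Union>\<C> \<in> {M. distant_z_filter v p f W d M}"
    if "\<C> \<noteq> {}" and chain: "subset.chain {M. distant_z_filter v p f W d M} \<C>" for \<C>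
  proof -
    have "subset.chain {M. z_filter M} \<C>"
      using chain unfolding subset_chain_def distant_z_filter_def by blast
    then have "z_filter (\<Union>\<C>)"
      using z_filter_Union_chain \<open>\<C> \<noteq> {}\<close> by blast
    moreover have "dist_ge_on v p f W d F" if "F \<in> \<Union>\<C>" for F
      using that chain unfolding subset_chain_def distant_z_filter_def by blast
    ultimately show ?thesis
      unfolding distant_z_filter_def by blast
  qed
  ultimately show ?thesis
    using that subset_Zorn_nonempty[of "{M. distant_z_filter v p f W d M}"] by (metis empty_iff mem_Collect_eq)
qed

lemma distant_z_filter_extend:
  assumes M: "distant_z_filter v p f W d M" and "zero_set Z" and "d > 0" and "W \<noteq> {}"
    and far: "\<And>F. F \<in> M \<Longrightarrow> dist_ge_on v p f W d (F \<inter> Z)"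
  shows "distant_z_filter v p f W d {Y. zero_set Y \<and> (\<exists>F\<in>M. F \<inter> Z \<subseteq> Y)}"
proof -
  let ?M' = "{Y. zero_set Y \<and> (\<exists>F\<in>M. F \<inter> Z \<subseteq> Y)}"
  have zf: "z_filter M"
    using M unfolding distant_z_filter_def by blast
  have nonempty: "F \<inter> Z \<noteq> {}" if "F \<in> M" for F
    using far[OF that] \<open>d > 0\<close> \<open>W \<noteq> {}\<close> unfolding dist_ge_on_def by fastforce
  have "z_filter ?M'"
    unfolding z_filter_def
  proof (intro conjI ballI allI impI)
    show "?M' \<noteq> {}"
      using \<open>zero_set Z\<close> z_filter_UNIV[OF zf] by blast
    show "{} \<notin> ?M'"
      using nonempty by blast
  next
    fix Y1 Y2 assume "Y1 \<in> ?M'" "Y2 \<in> ?M'"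
    then obtain F1 F2 where "F1 \<in> M" "F1 \<inter> Z \<subseteq> Y1" "F2 \<in> M" "F2 \<inter> Z \<subseteq> Y2" "zero_set Y1" "zero_set Y2"
      by blast
    then have "F1 \<inter> F2 \<in> M" "(F1 \<inter> F2) \<inter> Z \<subseteq> Y1 \<inter> Y2" "zero_set (Y1 \<inter> Y2)"
      using z_filter_Int[OF zf] zero_set_Int by blast+
    then show "Y1 \<inter> Y2 \<in> ?M'"
      by blast
  qed auto
  moreover have "dist_ge_on v p f W d Y" if "Y \<in> ?M'" for Y
  proof -
    obtain F where "F \<in> M" "F \<inter> Z \<subseteq> Y"
      using \<open>Y \<in> ?M'\<close> by blast
    then show ?thesis
      using far[of F] unfolding dist_ge_on_def by (meson subsetD)
  qed
  ultimately show ?thesis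
    unfolding distant_z_filter_def by blast
qed

lemma maximal_distant_z_filter_not_mem:
  assumes M: "distant_z_filter v p f W d M"
    and maximal: "\<And>M'. distant_z_filter v p f W d M' \<Longrightarrow> M \<subseteq> M' \<Longrightarrow> M' = M"
    and "d > 0" and "W \<noteq> {}" and "zero_set Z" and "Z \<notin> M"
  obtains F r g where "F \<in> M" and "r < d" and "g \<in> W" and "\<And>x. x \<in> F \<inter> Z \<Longrightarrow> v x * p (f x - g x) \<le> r"
proof -
  have "\<exists>F\<in>M. \<not> dist_ge_on v p f W d (F \<inter> Z)"
  proof (rule ccontr)
    assume "\<not> ?thesis"
    then have "distant_z_filter v p f W d {Y. zero_set Y \<and> (\<exists>F\<in>M. F \<inter> Z \<subseteq> Y)}"
      using distant_z_filter_extend[OF M \<open>zero_set Z\<close> \<open>d > 0\<close> \<open>W \<noteq> {}\<close>] by blast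
    moreover have "M \<subseteq> {Y. zero_set Y \<and> (\<exists>F\<in>M. F \<inter> Z \<subseteq> Y)}"
      using M unfolding distant_z_filter_def z_filter_def by blast
    ultimately have "{Y. zero_set Y \<and> (\<exists>F\<in>M. F \<inter> Z \<subseteq> Y)} = M"
      by (rule maximal)
    moreover have "Z \<in> {Y. zero_set Y \<and> (\<exists>F\<in>M. F \<inter> Z \<subseteq> Y)}"
      using M \<open>zero_set Z\<close> z_filter_UNIV unfolding distant_z_filter_def by blast
    ultimately show False
      using \<open>Z \<notin> M\<close> by blast
  qed
  then show ?thesis
    using that unfolding dist_ge_on_def by (meson not_le)
qed

lemma mem_supp_if_nonzero: "v x \<noteq> 0 \<Longrightarrow> x \<in> supp v"
  unfolding supp_def by (auto intro: closure_subset[THEN subsetD])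

lemma distant_z_filter_meets_supp:
  assumes "distant_z_filter v p f W d M" and "d > 0" and "g \<in> W" and "F \<in> M"
  shows "F \<inter> supp v \<noteq> {}"
proof -
  obtain x where "x \<in> F" "0 < v x * p (f x - g x)"
    using assms unfolding distant_z_filter_def dist_ge_on_def by blast
  then have "x \<in> supp v"
    by (intro mem_supp_if_nonzero) auto
  with \<open>x \<in> F\<close> show ?thesis
    by blast
qed

lemma affine_combination_error_le:
  fixes a b e0 e1 B r \<eta> :: real
  assumes "0 \<le> a" "0 \<le> b" "0 \<le> e0" "e0 \<le> B" "0 \<le> e1" "e1 \<le> B" "0 \<le> r" "0 \<le> \<eta>"
    and "a + b \<le> 1 + \<eta>"
    and "(e0 \<le> r \<and> e1 \<le> r) \<or> (e0 \<le> r \<and> b \<le> \<eta>) \<or> (e1 \<le> r \<and> a \<le> \<eta>)"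
  shows "a * e0 + b * e1 \<le> r + \<eta> * (r + B)"
proof -
  have "0 \<le> \<eta> * B" "0 \<le> \<eta> * r"
    using assms by simp_all
  from assms(10) consider "e0 \<le> r" "e1 \<le> r" | "e0 \<le> r" "b \<le> \<eta>" | "e1 \<le> r" "a \<le> \<eta>"
    by blast
  then show ?thesis
  proof cases
    case 1
    have "a * e0 + b * e1 \<le> (a + b) * r"
      using 1 assms by (simp add: distrib_right add_mono mult_left_mono)
    also have "\<dots> \<le> (1 + \<eta>) * r"
      using assms by (simp add: mult_right_mono)
    finally show ?thesis
      using \<open>0 \<le> \<eta> * B\<close> by (simp add: algebra_simps)
  next
    case 2
    have "a * e0 \<le> a * r"
      using 2 assms by (simp add: mult_left_mono)
    also have "\<dots> \<le> (1 + \<eta>) * r"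
      using assms by (intro mult_right_mono) auto
    finally have "a * e0 \<le> (1 + \<eta>) * r" .
    moreover have "b * e1 \<le> \<eta> * B"
      using 2 assms by (intro mult_mono) auto
    ultimately show ?thesis
      by (simp add: algebra_simps)
  next
    case 3
    have "b * e1 \<le> b * r"
      using 3 assms by (simp add: mult_left_mono)
    also have "\<dots> \<le> (1 + \<eta>) * r"
      using assms by (intro mult_right_mono) auto
    finally have "b * e1 \<le> (1 + \<eta>) * r" .
    moreover have "a * e0 \<le> \<eta> * B"
      using 3 assms by (intro mult_mono) auto
    ultimately show ?thesis
      by (simp add: algebra_simps)
  qed
qed

lemma (in seminormed) weighted_error_affine_combination_le:
  assumes "0 \<le> t" and "0 \<le> r" and "0 \<le> \<eta>" and "cmod c + cmod (1 - c) \<le> 1 + \<eta>"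
    and "t * q (y - y0) \<le> B" and "t * q (y - y1) \<le> B"
    and "(t * q (y - y0) \<le> r \<and> t * q (y - y1) \<le> r) \<or> (t * q (y - y0) \<le> r \<and> cmod (1 - c) \<le> \<eta>) \<or>
      (t * q (y - y1) \<le> r \<and> cmod c \<le> \<eta>)"
  shows "t * q (y - (sc c y0 + sc (1 - c) y1)) \<le> r + \<eta> * (r + B)"
proof -
  have "y - (sc c y0 + sc (1 - c) y1) = sc c (y - y0) + sc (1 - c) (y - y1)"
    using sc_add_left[of c "1 - c" y] by (simp add: sc_diff_right algebra_simps)
  then have "t * q (y - (sc c y0 + sc (1 - c) y1)) \<le> t * (cmod c * q (y - y0) + cmod (1 - c) * q (y - y1))"
    using seminorm_add[of "sc c (y - y0)" "sc (1 - c) (y - y1)"] \<open>0 \<le> t\<close> by (simp add: mult_left_mono)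
  also have "\<dots> = cmod c * (t * q (y - y0)) + cmod (1 - c) * (t * q (y - y1))"
    by (simp add: algebra_simps)
  also have "\<dots> \<le> r + \<eta> * (r + B)"
    using assms seminorm_nonneg by (intro affine_combination_error_le) auto
  finally show ?thesis .
qed

lemma (in seminormed) glue_along_multiplier:
  assumes v: "\<forall>x. 0 \<le> v x" and mult: "is_multiplier sc \<phi> W" and M: "z_filter M"
    and c: "0 \<le> c1" "c1 < c2" "c2 \<le> 1"
    and near: "\<And>\<delta>. \<delta> > 0 \<Longrightarrow> \<exists>F\<in>M. \<forall>x\<in>F \<inter> supp v. \<exists>\<tau>. 0 \<le> \<tau> \<and> \<tau> \<le> 1 \<and> cmod (\<phi> x - of_real \<tau>) < \<delta>"
    and "F0 \<in> M" "F1 \<in> M" "g0 \<in> W" "g1 \<in> W" "0 \<le> r" "r < d"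
    and low: "\<And>x. x \<in> F0 \<Longrightarrow> Re (\<phi> x) \<le> c2 \<Longrightarrow> v x * q (f x - g0 x) \<le> r"
    and high: "\<And>x. x \<in> F1 \<Longrightarrow> c1 \<le> Re (\<phi> x) \<Longrightarrow> v x * q (f x - g1 x) \<le> r"
    and bdd0: "\<And>x. v x * q (f x - g0 x) \<le> B" and bdd1: "\<And>x. v x * q (f x - g1 x) \<le> B"
  obtains E g r' where "E \<in> M" and "g \<in> W" and "r' < d" and "\<And>x. x \<in> E \<Longrightarrow> v x * q (f x - g x) \<le> r'"
proof -
  have err_nonneg: "0 \<le> v x * q y" for x y
    using v seminorm_nonneg by simp
  then have "0 \<le> B"
    using bdd0[of undefined] err_nonneg[of undefined "f undefined - g0 undefined"] by linarith
  define \<eta> where "\<eta> = (d - r) / (2 * (r + B + 1))"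
  have "\<eta> > 0"
    unfolding \<eta>_def using \<open>0 \<le> r\<close> \<open>r < d\<close> \<open>0 \<le> B\<close> by simp
  have small: "r + \<eta> * (r + B) \<le> r + (d - r) / 2"
  proof -
    have "\<eta> * (r + B) \<le> \<eta> * (r + B + 1)"
      using \<open>\<eta> > 0\<close> by simp
    also have "\<dots> = (d - r) / 2"
      unfolding \<eta>_def using \<open>0 \<le> r\<close> \<open>0 \<le> B\<close> by (simp add: field_simps)
    finally show ?thesis
      by simp
  qed
  obtain n m :: nat and \<delta> :: real where "\<delta> > 0" and cutoff: "\<And>z t. 0 \<le> t \<Longrightarrow> t \<le> 1 \<Longrightarrow> cmod (z - of_real t) < \<delta> \<Longrightarrow>
      cmod ((1 - z ^ n) ^ m) + cmod (1 - (1 - z ^ n) ^ m) \<le> 1 + \<eta> \<and>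
      (Re z < c1 \<longrightarrow> cmod (1 - (1 - z ^ n) ^ m) \<le> \<eta>) \<and> (c2 < Re z \<longrightarrow> cmod ((1 - z ^ n) ^ m) \<le> \<eta>)"
    using cutoff_power_near_unit_interval[OF c \<open>\<eta> > 0\<close>] by metis
  obtain F' where "F' \<in> M" and F': "\<And>x. x \<in> F' \<inter> supp v \<Longrightarrow> \<exists>\<tau>. 0 \<le> \<tau> \<and> \<tau> \<le> 1 \<and> cmod (\<phi> x - of_real \<tau>) < \<delta>"
    using near[OF \<open>\<delta> > 0\<close>] by blast
  define \<psi> where "\<psi> x = (1 - \<phi> x ^ n) ^ m" for x
  have "is_multiplier sc \<psi> W"
    unfolding \<psi>_def by (intro is_multiplier_power is_multiplier_one_minus mult)
  define g where "g = (\<lambda>x. sc (\<psi> x) (g0 x) + sc (1 - \<psi> x) (g1 x))"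
  show ?thesis
  proof
    show "F0 \<inter> F1 \<inter> F' \<in> M"
      using z_filter_Int[OF M] \<open>F0 \<in> M\<close> \<open>F1 \<in> M\<close> \<open>F' \<in> M\<close> by blast
    show "g \<in> W"
      using \<open>is_multiplier sc \<psi> W\<close> \<open>g0 \<in> W\<close> \<open>g1 \<in> W\<close> unfolding is_multiplier_def g_def by simp
    show "r + (d - r) / 2 < d"
      using \<open>r < d\<close> by (simp add: field_simps)
    fix x assume x: "x \<in> F0 \<inter> F1 \<inter> F'"
    show "v x * q (f x - g x) \<le> r + (d - r) / 2"
    proof (cases "v x = 0")
      case True
      then show ?thesis
        using \<open>0 \<le> r\<close> \<open>r < d\<close> by simp
    next
      case False
      then have "x \<in> supp v"
        by (rule mem_supp_if_nonzero)
      then obtain \<tau> where "0 \<le> \<tau>" "\<tau> \<le> 1" "cmod (\<phi> x - of_real \<tau>) < \<delta>"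
        using F' x by blast
      note cut = cutoff[OF this]
      have "Re (\<phi> x) < c1 \<or> c2 < Re (\<phi> x) \<or> (c1 \<le> Re (\<phi> x) \<and> Re (\<phi> x) \<le> c2)"
        by linarith
      then have "(v x * q (f x - g0 x) \<le> r \<and> v x * q (f x - g1 x) \<le> r) \<or>
          (v x * q (f x - g0 x) \<le> r \<and> cmod (1 - \<psi> x) \<le> \<eta>) \<or> (v x * q (f x - g1 x) \<le> r \<and> cmod (\<psi> x) \<le> \<eta>)"
        using low[of x] high[of x] x cut c unfolding \<psi>_def by auto
      then have "v x * q (f x - g x) \<le> r + \<eta> * (r + B)"
        unfolding g_def using cut bdd0 bdd1 v \<open>0 \<le> r\<close> \<open>\<eta> > 0\<close> unfolding \<psi>_def
        by (intro weighted_error_affine_combination_le) auto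
      with small show ?thesis
        by linarith
    qed
  qed
qed

lemma closed_far_from_unit_interval:
  "closed {z::complex. \<forall>\<tau>::real. 0 \<le> \<tau> \<and> \<tau> \<le> 1 \<longrightarrow> \<delta> \<le> cmod (z - of_real \<tau>)}"
proof -
  have "{z::complex. \<forall>\<tau>::real. 0 \<le> \<tau> \<and> \<tau> \<le> 1 \<longrightarrow> \<delta> \<le> cmod (z - of_real \<tau>)} =
      (\<Inter>\<tau>\<in>{0..1::real}. {z. \<delta> \<le> cmod (z - of_real \<tau>)})"
    by auto
  moreover have "closed {z::complex. \<delta> \<le> cmod (z - of_real \<tau>)}" for \<tau> :: real
    by (intro closed_Collect_le continuous_intros)
  ultimately show ?thesis
    by (simp add: closed_INT)
qed

lemma z_filter_eventually_near_unit_interval: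
  fixes \<phi> :: "'a::topological_space \<Rightarrow> complex"
  assumes M: "z_filter M" and "F0 \<in> M" and "bounded (\<phi> ` (F0 \<inter> S))"
    and real: "\<And>z. (\<And>F. F \<in> M \<Longrightarrow> z \<in> closure (\<phi> ` (F \<inter> S))) \<Longrightarrow> Im z = 0 \<and> 0 \<le> Re z \<and> Re z \<le> 1"
    and "\<delta> > 0"
  shows "\<exists>F\<in>M. \<forall>x\<in>F \<inter> S. \<exists>\<tau>. 0 \<le> \<tau> \<and> \<tau> \<le> 1 \<and> cmod (\<phi> x - of_real \<tau>) < \<delta>"
proof (rule ccontr)
  let ?Far = "{z::complex. \<forall>\<tau>::real. 0 \<le> \<tau> \<and> \<tau> \<le> 1 \<longrightarrow> \<delta> \<le> cmod (z - of_real \<tau>)}"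
  assume "\<not> ?thesis"
  then have "\<And>F. F \<in> M \<Longrightarrow> \<exists>x\<in>F \<inter> S. \<phi> x \<in> ?Far"
    by (simp add: not_less) (meson linorder_not_le)
  then have "\<exists>z\<in>?Far. \<forall>F\<in>M. z \<in> closure (\<phi> ` (F \<inter> S))"
    by (rule z_filter_common_closure_point[OF M \<open>F0 \<in> M\<close> assms(3) closed_far_from_unit_interval])
  then obtain z where "z \<in> ?Far" and "\<And>F. F \<in> M \<Longrightarrow> z \<in> closure (\<phi> ` (F \<inter> S))"
    by blast
  then have "Im z = 0" "0 \<le> Re z" "Re z \<le> 1" and "\<delta> \<le> cmod (z - of_real (Re z))"
    using real by auto
  moreover have "z - of_real (Re z) = 0" if "Im z = 0"
    using that by (simp add: complex_eq_iff)
  ultimately show False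
    using \<open>\<delta> > 0\<close> by simp
qed

lemma closure_point_excludes_z_filter_member:
  assumes "\<And>F. F \<in> M \<Longrightarrow> z \<in> closure (\<phi> ` (F \<inter> S))" and "closed C" and "z \<notin> C"
    and "\<And>x. x \<in> Z \<Longrightarrow> \<phi> x \<in> C"
  shows "Z \<notin> M"
proof
  assume "Z \<in> M"
  have "closure (\<phi> ` (Z \<inter> S)) \<subseteq> C"
    using assms(2,4) by (intro closure_minimal) auto
  with assms(1)[OF \<open>Z \<in> M\<close>] \<open>z \<notin> C\<close> show False
    by blast
qed

lemma (in seminormed) maximal_distant_z_filter_no_two_cluster_values:
  assumes v: "\<forall>x. 0 \<le> v x" and "continuous_on UNIV \<phi>" and mult: "is_multiplier sc \<phi> W"
    and "d > 0" and "W \<noteq> {}" and bdd: "\<forall>g\<in>W. \<exists>B. \<forall>x. v x * q (f x - g x) \<le> B"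
    and M: "distant_z_filter v q f W d M"
    and maximal: "\<And>M'. distant_z_filter v q f W d M' \<Longrightarrow> M \<subseteq> M' \<Longrightarrow> M' = M"
    and near: "\<And>\<delta>. \<delta> > 0 \<Longrightarrow> \<exists>F\<in>M. \<forall>x\<in>F \<inter> supp v. \<exists>\<tau>. 0 \<le> \<tau> \<and> \<tau> \<le> 1 \<and> cmod (\<phi> x - of_real \<tau>) < \<delta>"
    and s: "\<And>F. F \<in> M \<Longrightarrow> of_real s \<in> closure (\<phi> ` (F \<inter> supp v))"
    and t: "\<And>F. F \<in> M \<Longrightarrow> of_real t \<in> closure (\<phi> ` (F \<inter> supp v))"
    and "0 \<le> s" and "s < t" and "t \<le> 1"
  shows False
proof -
  have zf: "z_filter M"
    using M unfolding distant_z_filter_def by blast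
  define c1 where "c1 = (2 * s + t) / 3"
  define c2 where "c2 = (s + 2 * t) / 3"
  have c: "0 \<le> c1" "c1 < c2" "c2 \<le> 1" and "s < c1" "c2 < t"
    using \<open>0 \<le> s\<close> \<open>s < t\<close> \<open>t \<le> 1\<close> by (simp_all add: c1_def c2_def)
  have "{x. Re (\<phi> x) \<le> c2} \<notin> M"
    using \<open>c2 < t\<close> by (intro closure_point_excludes_z_filter_member[OF t closed_halfspace_Re_le]) auto
  then obtain F0 r0 g0 where "F0 \<in> M" "r0 < d" "g0 \<in> W"
    and low: "\<And>x. x \<in> F0 \<inter> {x. Re (\<phi> x) \<le> c2} \<Longrightarrow> v x * q (f x - g0 x) \<le> r0"
    using maximal_distant_z_filter_not_mem[OF M maximal \<open>d > 0\<close> \<open>W \<noteq> {}\<close>]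
      zero_set_Re_le[OF \<open>continuous_on UNIV \<phi>\<close>] by metis
  have "{x. c1 \<le> Re (\<phi> x)} \<notin> M"
    using \<open>s < c1\<close> by (intro closure_point_excludes_z_filter_member[OF s closed_halfspace_Re_ge]) auto
  then obtain F1 r1 g1 where "F1 \<in> M" "r1 < d" "g1 \<in> W"
    and high: "\<And>x. x \<in> F1 \<inter> {x. c1 \<le> Re (\<phi> x)} \<Longrightarrow> v x * q (f x - g1 x) \<le> r1"
    using maximal_distant_z_filter_not_mem[OF M maximal \<open>d > 0\<close> \<open>W \<noteq> {}\<close>]
      zero_set_Re_ge[OF \<open>continuous_on UNIV \<phi>\<close>] by metis
  obtain B0 B1 where "\<And>x. v x * q (f x - g0 x) \<le> B0" "\<And>x. v x * q (f x - g1 x) \<le> B1"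
    using bdd \<open>g0 \<in> W\<close> \<open>g1 \<in> W\<close> by meson
  then have "\<And>x. v x * q (f x - g0 x) \<le> max B0 B1" "\<And>x. v x * q (f x - g1 x) \<le> max B0 B1"
    by (meson max.coboundedI1 max.coboundedI2 order_trans)+
  moreover define r where "r = max 0 (max r0 r1)"
  moreover have "0 \<le> r" "r < d"
    using \<open>r0 < d\<close> \<open>r1 < d\<close> \<open>d > 0\<close> by (simp_all add: r_def)
  moreover have "\<And>x. x \<in> F0 \<Longrightarrow> Re (\<phi> x) \<le> c2 \<Longrightarrow> v x * q (f x - g0 x) \<le> r"
    "\<And>x. x \<in> F1 \<Longrightarrow> c1 \<le> Re (\<phi> x) \<Longrightarrow> v x * q (f x - g1 x) \<le> r"
    using low high by (fastforce simp: r_def intro: max.coboundedI2)+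
  ultimately obtain E g r' where "E \<in> M" "g \<in> W" "r' < d" "\<And>x. x \<in> E \<Longrightarrow> v x * q (f x - g x) \<le> r'"
    using glue_along_multiplier[OF v mult zf c near \<open>F0 \<in> M\<close> \<open>F1 \<in> M\<close> \<open>g0 \<in> W\<close> \<open>g1 \<in> W\<close>] by metis
  moreover have "dist_ge_on v q f W d E"
    using M \<open>E \<in> M\<close> unfolding distant_z_filter_def by blast
  ultimately show False
    unfolding dist_ge_on_def by (meson not_le)
qed

lemma Some_in_ext_closure_iff: "Some z \<in> ext_closure S \<longleftrightarrow> z \<in> closure S"
  unfolding ext_closure_def by auto

lemma None_notin_ext_closure_imp_bounded:
  assumes "None \<notin> (\<Inter>F\<in>M. ext_closure (g F))"
  obtains F where "F \<in> M" and "bounded (g F)"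
  using assms unfolding ext_closure_def by (auto split: if_splits)

lemma two_cluster_values_in_unit_interval:
  fixes \<phi> :: "'a::topological_space \<Rightarrow> complex"
  assumes zf: "z_filter M" and meets: "\<And>F. F \<in> M \<Longrightarrow> F \<inter> S \<noteq> {}"
    and "F0 \<in> M" and "bounded (\<phi> ` (F0 \<inter> S))"
    and sub: "(\<Inter>F\<in>M. ext_closure (\<phi> ` (F \<inter> S))) \<subseteq> Some ` {z. Im z = 0 \<and> 0 \<le> Re z \<and> Re z \<le> 1}"
    and not_single: "\<nexists>w. (\<Inter>F\<in>M. ext_closure (\<phi> ` (F \<inter> S))) = {w}"
  obtains s t where "0 \<le> s" and "s < t" and "t \<le> 1"
    and "\<And>F. F \<in> M \<Longrightarrow> of_real s \<in> closure (\<phi> ` (F \<inter> S))"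
    and "\<And>F. F \<in> M \<Longrightarrow> of_real t \<in> closure (\<phi> ` (F \<inter> S))"
proof -
  let ?I = "\<Inter>F\<in>M. ext_closure (\<phi> ` (F \<inter> S))"
  have Some_mem: "Some z \<in> ?I \<longleftrightarrow> (\<forall>F\<in>M. z \<in> closure (\<phi> ` (F \<inter> S)))" for z
    by (simp add: Some_in_ext_closure_iff)
  have "\<exists>x\<in>F \<inter> S. \<phi> x \<in> UNIV" if "F \<in> M" for F
    using meets[OF that] by blast
  then have "\<exists>z\<in>UNIV. \<forall>F\<in>M. z \<in> closure (\<phi> ` (F \<inter> S))"
    by (rule z_filter_common_closure_point[OF zf \<open>F0 \<in> M\<close> \<open>bounded _\<close> closed_UNIV])
  then obtain z1 where "Some z1 \<in> ?I"
    using Some_mem by blast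
  moreover have "?I \<noteq> {Some z1}"
    using not_single by blast
  ultimately obtain w where "w \<in> ?I" "w \<noteq> Some z1"
    by blast
  then obtain z2 where "Some z2 \<in> ?I" "z2 \<noteq> z1"
    using sub by blast
  have real: "z = of_real (Re z)" "Re z \<in> {0..1}" if "Some z \<in> ?I" for z
    using sub that by (auto simp: complex_eq_iff)
  then have "Re z1 \<noteq> Re z2"
    using \<open>Some z1 \<in> ?I\<close> \<open>Some z2 \<in> ?I\<close> \<open>z2 \<noteq> z1\<close> by metis
  then show ?thesis
    using that real[OF \<open>Some z1 \<in> ?I\<close>] real[OF \<open>Some z2 \<in> ?I\<close>] \<open>Some z1 \<in> ?I\<close> \<open>Some z2 \<in> ?I\<close> Some_mem
    by (metis atLeastAtMost_iff linorder_neqE_linordered_idom)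
qed

lemma (in seminormed) maximal_distant_z_filter_antisymmetric:
  assumes v: "\<forall>x. 0 \<le> v x" and A_cont: "\<forall>\<phi>\<in>A. continuous_on UNIV \<phi>"
    and A_mult: "\<forall>\<phi>\<in>A. is_multiplier sc \<phi> W"
    and "d > 0" and "W \<noteq> {}" and bdd: "\<forall>g\<in>W. \<exists>B. \<forall>x. v x * q (f x - g x) \<le> B"
    and M: "distant_z_filter v q f W d M"
    and maximal: "\<And>M'. distant_z_filter v q f W d M' \<Longrightarrow> M \<subseteq> M' \<Longrightarrow> M' = M"
  shows "antisymmetric_zf A v M"
proof -
  have zf: "z_filter M"
    using M unfolding distant_z_filter_def by blast
  have meets: "F \<inter> supp v \<noteq> {}" if "F \<in> M" for F
    using distant_z_filter_meets_supp[OF M \<open>d > 0\<close> _ that] \<open>W \<noteq> {}\<close> by blast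
  have "\<exists>w. (\<Inter>F\<in>M. ext_closure (\<phi> ` (F \<inter> supp v))) = {w}"
    if "\<phi> \<in> A" and sub: "(\<Inter>F\<in>M. ext_closure (\<phi> ` (F \<inter> supp v))) \<subseteq> Some ` {z. Im z = 0 \<and> 0 \<le> Re z \<and> Re z \<le> 1}"
    for \<phi>
  proof (rule ccontr)
    assume not_single: "\<nexists>w. (\<Inter>F\<in>M. ext_closure (\<phi> ` (F \<inter> supp v))) = {w}"
    have "None \<notin> (\<Inter>F\<in>M. ext_closure (\<phi> ` (F \<inter> supp v)))"
      using sub by blast
    then obtain F0 where "F0 \<in> M" and "bounded (\<phi> ` (F0 \<inter> supp v))"
      by (rule None_notin_ext_closure_imp_bounded)
    have real: "Im z = 0 \<and> 0 \<le> Re z \<and> Re z \<le> 1"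
      if "\<And>F. F \<in> M \<Longrightarrow> z \<in> closure (\<phi> ` (F \<inter> supp v))" for z
    proof -
      have "Some z \<in> (\<Inter>F\<in>M. ext_closure (\<phi> ` (F \<inter> supp v)))"
        using that by (simp add: Some_in_ext_closure_iff)
      then show ?thesis
        using sub by blast
    qed
    have near: "\<exists>F\<in>M. \<forall>x\<in>F \<inter> supp v. \<exists>\<tau>. 0 \<le> \<tau> \<and> \<tau> \<le> 1 \<and> cmod (\<phi> x - of_real \<tau>) < \<delta>"
      if "\<delta> > 0" for \<delta>
      using z_filter_eventually_near_unit_interval[OF zf \<open>F0 \<in> M\<close> \<open>bounded _\<close> real that] .
    obtain s t where "0 \<le> s" "s < t" "t \<le> 1"
      and "\<And>F. F \<in> M \<Longrightarrow> of_real s \<in> closure (\<phi> ` (F \<inter> supp v))"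
      and "\<And>F. F \<in> M \<Longrightarrow> of_real t \<in> closure (\<phi> ` (F \<inter> supp v))"
      using two_cluster_values_in_unit_interval[OF zf meets \<open>F0 \<in> M\<close> \<open>bounded _\<close> sub not_single] by blast
    then show False
      using maximal_distant_z_filter_no_two_cluster_values[OF v A_cont[rule_format, OF \<open>\<phi> \<in> A\<close>]
          A_mult[rule_format, OF \<open>\<phi> \<in> A\<close>] \<open>d > 0\<close> \<open>W \<noteq> {}\<close> bdd M maximal near] by blast
  qed
  then show ?thesis
    unfolding antisymmetric_zf_def using zf meets by blast
qed

section \<open>Local approximation and the distance to W\<close>

context seminormed
begin

lemma weighted_error_eq:
  assumes "0 \<le> t"
  shows "t * q (y - z) = q (sc (of_real t) y - sc (of_real t) z)"
  using assms by (simp add: sc_diff_right[symmetric])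

lemma weighted_error_triangle:
  assumes "0 \<le> t"
  shows "q (sc (of_real t) z - k) \<le> t * q (y - z) + q (sc (of_real t) y - k)"
proof -
  have "q (sc (of_real t) z - k) \<le> q (sc (of_real t) z - sc (of_real t) y) + q (sc (of_real t) y - k)"
    by (rule seminorm_diff_triangle)
  also have "q (sc (of_real t) z - sc (of_real t) y) = t * q (y - z)"
    using weighted_error_eq[OF assms] seminorm_diff_commute by metis
  finally show ?thesis .
qed

lemma weighted_error_le_via_center:
  assumes "0 \<le> t"
  shows "t * q (y - z) \<le> q (sc (of_real t) y - k) + q (sc (of_real t) z - k)"
proof -
  have "t * q (y - z) = q (sc (of_real t) y - sc (of_real t) z)"
    by (rule weighted_error_eq[OF assms])
  also have "\<dots> \<le> q (sc (of_real t) y - k) + q (k - sc (of_real t) z)"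
    by (rule seminorm_diff_triangle)
  also have "q (k - sc (of_real t) z) = q (sc (of_real t) z - k)"
    by (rule seminorm_diff_commute)
  finally show ?thesis .
qed

lemma dist_vp_zero_imp_local_approximation:
  assumes v: "\<forall>x. 0 \<le> v x" and "dist_vp sc v q f W = 0" and "\<epsilon> > 0"
  shows "\<exists>g\<in>W. \<forall>x. q (sc (of_real (v x)) (f x) - y) < \<epsilon> \<longrightarrow> q (sc (of_real (v x)) (g x) - y) < 2 * \<epsilon>"
proof -
  have "(INF g\<in>W. SUP x. ereal (v x * q (f x - g x))) < ereal \<epsilon>"
    using assms unfolding dist_vp_def by simp
  then obtain g where "g \<in> W" and "(SUP x. ereal (v x * q (f x - g x))) < ereal \<epsilon>"
    unfolding INF_less_iff by blast
  have err: "v x * q (f x - g x) < \<epsilon>" for x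
  proof -
    have "ereal (v x * q (f x - g x)) \<le> (SUP x. ereal (v x * q (f x - g x)))"
      by (rule SUP_upper) simp
    also have "\<dots> < ereal \<epsilon>"
      by fact
    finally show ?thesis
      by simp
  qed
  have "q (sc (of_real (v x)) (g x) - y) < 2 * \<epsilon>" if "q (sc (of_real (v x)) (f x) - y) < \<epsilon>" for x
    using weighted_error_triangle[of "v x" "g x" y "f x"] err[of x] that v by simp
  with \<open>g \<in> W\<close> show ?thesis
    by blast
qed

lemma weighted_error_bounded:
  assumes "q \<in> P" and v: "\<forall>x. 0 \<le> v x" and "v \<in> V" and "g \<in> FVb sc P V"
    and "compactin (lc_topology P) (lc_topology P closure_of range (\<lambda>x. sc (of_real (v x)) (f x)))"
  shows "\<exists>B. \<forall>x. v x * q (f x - g x) \<le> B"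
proof -
  let ?h = "\<lambda>x. sc (of_real (v x)) (f x)"
  have "compactin euclidean ((\<lambda>w. q (w - 0)) ` (lc_topology P closure_of range ?h))"
    by (rule image_compactin[OF assms(5) continuous_map_seminorm[OF \<open>q \<in> P\<close>]])
  then obtain Bf where "\<forall>w\<in>lc_topology P closure_of range ?h. \<bar>q w\<bar> \<le> Bf"
    by (auto simp: bounded_real dest!: compact_imp_bounded)
  moreover have "?h x \<in> lc_topology P closure_of range ?h" for x
    using closure_of_subset[of "range ?h" "lc_topology P"] by auto
  ultimately have Bf: "v x * q (f x) \<le> Bf" for x
    using v by (metis abs_le_D1 abs_of_nonneg norm_of_real seminorm_sc)
  have FVb: "\<forall>u\<in>V. \<forall>q'\<in>P. bdd_above (range (\<lambda>x. u x * q' (g x)))"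
    using \<open>g \<in> FVb sc P V\<close> unfolding FVb_def by simp
  have "bdd_above (range (\<lambda>x. v x * q (g x)))"
    using bspec[OF bspec[OF FVb \<open>v \<in> V\<close>] \<open>q \<in> P\<close>] by simp
  then obtain Bg where Bg: "v x * q (g x) \<le> Bg" for x
    unfolding bdd_above_def by blast
  have "v x * q (f x - g x) \<le> Bf + Bg" for x
  proof -
    have "v x * q (f x - g x) \<le> v x * (q (f x) + q (g x))"
      using seminorm_add[of "f x" "- g x"] v by (simp add: mult_left_mono)
    then show ?thesis
      using Bf[of x] Bg[of x] by (simp add: distrib_left)
  qed
  then show ?thesis
    by blast
qed

lemma dist_vp_nonzero_imp_dist_ge_on:
  assumes v: "\<forall>x. 0 \<le> v x" and "g1 \<in> W" and bdd: "\<And>x. v x * q (f x - g1 x) \<le> B"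
    and "dist_vp sc v q f W \<noteq> 0"
  obtains d where "d > 0" and "dist_ge_on v q f W d UNIV"
proof -
  define D where "D = dist_vp sc v q f W"
  have "0 \<le> D"
    unfolding D_def dist_vp_def
  proof (rule INF_greatest)
    fix g assume "g \<in> W"
    have "ereal 0 \<le> ereal (v undefined * q (f undefined - g undefined))"
      using v seminorm_nonneg by simp
    also have "\<dots> \<le> (SUP x. ereal (v x * q (f x - g x)))"
      by (rule SUP_upper) simp
    finally show "0 \<le> (SUP x. ereal (v x * q (f x - g x)))"
      by (simp add: zero_ereal_def)
  qed
  moreover have "D \<le> ereal B"
  proof -
    have "D \<le> (SUP x. ereal (v x * q (f x - g1 x)))"
      unfolding D_def dist_vp_def by (rule INF_lower[OF \<open>g1 \<in> W\<close>])
    also have "\<dots> \<le> ereal B"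
      using bdd by (intro SUP_least) simp
    finally show ?thesis .
  qed
  moreover have "D \<noteq> 0"
    using assms(4) by (simp add: D_def)
  ultimately obtain d where "D = ereal d" "d > 0"
    by (cases D) auto
  moreover have "dist_ge_on v q f W d UNIV"
    unfolding dist_ge_on_def
  proof (intro allI impI ballI)
    fix r g assume "r < d" "g \<in> W"
    then have "ereal r < D"
      using \<open>D = ereal d\<close> by simp
    also have "D \<le> (SUP x. ereal (v x * q (f x - g x)))"
      unfolding D_def dist_vp_def by (rule INF_lower[OF \<open>g \<in> W\<close>])
    finally have "ereal r < (SUP x. ereal (v x * q (f x - g x)))" .
    then show "\<exists>x\<in>UNIV. r < v x * q (f x - g x)"
      unfolding less_SUP_iff by auto
  qed
  ultimately show ?thesis
    using that by blast
qed

end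

lemma (in seminormed) local_approximation_imp_dist_vp_zero:
  assumes P: "\<forall>p\<in>P. seminorm_on sc p" and "q \<in> P" and v: "\<forall>x. 0 \<le> v x"
    and A_cont: "\<forall>\<phi>\<in>A. continuous_on UNIV \<phi>" and A_mult: "\<forall>\<phi>\<in>A. is_multiplier sc \<phi> W"
    and bdd: "\<forall>g\<in>W. \<exists>B. \<forall>x. v x * q (f x - g x) \<le> B"
    and H: "Hausdorff_space (lc_topology P)"
    and cpt: "compactin (lc_topology P) (lc_topology P closure_of range (\<lambda>x. sc (of_real (v x)) (f x)))"
    and sep: "beta_separates sc P A v (\<lambda>x. sc (of_real (v x)) (f x))"
    and local: "\<forall>\<epsilon>>0. \<forall>y. \<exists>g\<in>W. \<forall>x. q (sc (of_real (v x)) (f x) - y) < \<epsilon> \<longrightarrow>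
        q (sc (of_real (v x)) (g x) - y) < 2 * \<epsilon>"
  shows "dist_vp sc v q f W = 0"
proof (rule ccontr)
  assume "dist_vp sc v q f W \<noteq> 0"
  obtain g1 where "g1 \<in> W"
    using local[rule_format, of 1 0] by auto
  then have "W \<noteq> {}"
    by blast
  obtain B1 where "\<And>x. v x * q (f x - g1 x) \<le> B1"
    using bdd \<open>g1 \<in> W\<close> by blast
  then obtain d where "d > 0" and "dist_ge_on v q f W d UNIV"
    using dist_vp_nonzero_imp_dist_ge_on[OF v \<open>g1 \<in> W\<close>] \<open>dist_vp sc v q f W \<noteq> 0\<close> by blast
  then obtain M where M: "distant_z_filter v q f W d M"
    and maximal: "\<And>M'. distant_z_filter v q f W d M' \<Longrightarrow> M \<subseteq> M' \<Longrightarrow> M' = M"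
    using maximal_distant_z_filter_exists by blast
  have "antisymmetric_zf A v M"
    by (rule maximal_distant_z_filter_antisymmetric[OF v A_cont A_mult \<open>d > 0\<close> \<open>W \<noteq> {}\<close> bdd M maximal])
  moreover have "d / 4 > 0"
    using \<open>d > 0\<close> by simp
  ultimately obtain k F where "F \<in> M" and near_k: "\<And>x. x \<in> F \<inter> supp v \<Longrightarrow> q (sc (of_real (v x)) (f x) - k) < d / 4"
    using antisymmetric_zf_concentrates[OF P \<open>q \<in> P\<close> H cpt sep] by blast
  obtain g where "g \<in> W"
    and g: "\<And>x. q (sc (of_real (v x)) (f x) - k) < d / 4 \<Longrightarrow> q (sc (of_real (v x)) (g x) - k) < 2 * (d / 4)"
    using local[rule_format, of "d / 4" k] \<open>d / 4 > 0\<close> by blast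
  have small: "v x * q (f x - g x) \<le> 3 * d / 4" if "x \<in> F" for x
  proof (cases "v x = 0")
    case True
    then show ?thesis
      using \<open>d > 0\<close> by simp
  next
    case False
    then have "x \<in> supp v"
      by (rule mem_supp_if_nonzero)
    then have close: "q (sc (of_real (v x)) (f x) - k) < d / 4"
      using near_k \<open>x \<in> F\<close> by blast
    then show ?thesis
      using weighted_error_le_via_center[of "v x" "f x" "g x" k] g[OF close] v by simp
  qed
  have "dist_ge_on v q f W d F"
    using M \<open>F \<in> M\<close> unfolding distant_z_filter_def by blast
  moreover have "3 * d / 4 < d"
    using \<open>d > 0\<close> by simp
  ultimately obtain x where "x \<in> F" "3 * d / 4 < v x * q (f x - g x)"
    using \<open>g \<in> W\<close> unfolding dist_ge_on_def by blast
  with small show False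
    by fastforce
qed

theorem theorem3p8:
  fixes sc :: "complex \<Rightarrow> 'x::ab_group_add \<Rightarrow> 'x"
    and P :: "('x \<Rightarrow> real) set"
    and V :: "('a::topological_space \<Rightarrow> real) set"
    and A :: "('a \<Rightarrow> complex) set"
    and W :: "('a \<Rightarrow> 'x) set"
    and p :: "'x \<Rightarrow> real" and v :: "'a \<Rightarrow> real" and f :: "'a \<Rightarrow> 'x"
  assumes cvs: "complex_vs sc"
    and seminorms: "\<forall>q\<in>P. seminorm_on sc q"
    and V_pos: "\<forall>u\<in>V. \<forall>x. u x \<ge> 0"
    and A_cont: "\<forall>\<phi>\<in>A. continuous_on UNIV \<phi>"
    and W_sub: "W \<subseteq> FVb sc P V"
    and A_mult: "\<forall>\<phi>\<in>A. is_multiplier sc \<phi> W"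
    and p_in: "p \<in> P" and v_in: "v \<in> V"
    and hausdorff: "Hausdorff_space (lc_topology P)"
    and cpt: "compactin (lc_topology P) (lc_topology P closure_of range (\<lambda>x. sc (complex_of_real (v x)) (f x)))"
    and cont: "continuous_map (subtopology euclidean (supp v)) (lc_topology P) (\<lambda>x. sc (complex_of_real (v x)) (f x))"
    and sep: "beta_separates sc P A v (\<lambda>x. sc (complex_of_real (v x)) (f x))"
  shows "dist_vp sc v p f W = 0 \<longleftrightarrow>
    (\<forall>\<epsilon>>0. \<forall>y. \<exists>g\<in>W. \<forall>x. p (sc (complex_of_real (v x)) (f x) - y) < \<epsilon> \<longrightarrow>
        p (sc (complex_of_real (v x)) (g x) - y) < 2 * \<epsilon>)"
proof -
  interpret seminormed sc p
    using cvs seminorms p_in by unfold_locales blast+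
  have v: "\<forall>x. 0 \<le> v x"
    using V_pos v_in by blast
  have bdd: "\<forall>g\<in>W. \<exists>B. \<forall>x. v x * p (f x - g x) \<le> B"
    using weighted_error_bounded[OF p_in v v_in _ cpt] W_sub by blast
  show ?thesis
  proof
    assume "dist_vp sc v p f W = 0"
    then show "\<forall>\<epsilon>>0. \<forall>y. \<exists>g\<in>W. \<forall>x. p (sc (of_real (v x)) (f x) - y) < \<epsilon> \<longrightarrow>
        p (sc (of_real (v x)) (g x) - y) < 2 * \<epsilon>"
      by (intro allI impI dist_vp_zero_imp_local_approximation[OF v])
  qed (rule local_approximation_imp_dist_vp_zero[OF seminorms p_in v A_cont A_mult bdd hausdorff cpt sep])
qed

end
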